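(* The ATE functional $\beta(P)=\mathbb{E}_P\big[\frac{YA}{\pi(\mathbb{S}(Z))}-\frac{Y(1-A)}{1-\pi(\mathbb{S}(Z))}\big]$ on $\mathbf{P}$ is pathwise differentiable. Specifically, let $\{P_\theta:\theta\in\Theta\}$ be a regular parametric submodel of $\mathbf{P}$ with $\Theta\subseteq\mathbb{R}^d$ open and bounded and $P_0=P_{\theta_0}$ for a unique $\theta_0$, chosen so that $\max_{a\in\{0,1\}}\sup_{\theta\in\Theta}\int y^2q_a(y,z;\theta)\,\nu_a(dy,dz)<\infty$, and let $\gamma(\theta)=\beta(P_\theta)$. Then $\gamma$ is differentiable at $\theta_0$ with gradient \[ \nabla\gamma(\theta_0)=\mathbb{E}_{P_0}[\varphi_1(Y,A,Z)\,\dot\ell(Y,A,Z;\theta_0)],\qquad \varphi_1(y,a,z)=\frac{ya}{\pi(\mathbb{S}(z))}-\frac{y(1-a)}{1-\pi(\mathbb{S}(z))}. \] Furthermore, the $L_2(P_0)$-projection of $\varphi_1$ onto $\dot{\mathbf{P}}$ is $\varphi_0(y,a,z)=\frac{a}{\pi(\mathbb{S}(z))}[y-m_\ast(1,z)]-\frac{1-a}{1-\pi(\mathbb{S}(z))}[y-m_\ast(0,z)]+m_\ast(1,z)-m_\ast(0,z)-\beta_0$.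
   Context: Let $\mu_0,\mu_1$ be $\sigma$-finite Borel measures on $\mathbb{R}$, $\mu_Z$ on $\mathbb{R}^k$, $\nu_a=\mu_a\otimes\mu_Z$, and $\nu$ on $\mathbb{R}\times\{0,1\}\times\mathbb{R}^k$ with $\nu(B\times\mathcal{A}\times C)=\sum_{a\in\mathcal{A}}\nu_a(B\times C)$. $\mathbf{Q}$ is a family of distributions of $W=(Y(0),Y(1),Z')'$ with $\mu_0\otimes\mu_1\otimes\mu_Z$-densities and $\mathbb{E}_Q[Y(a)^2]<\infty$; $q_a(\cdot;Q)$ the $\nu_a$-density of $(Y(a),Z)$; true $Q_0\in\mathbf{Q}$; $m_\ast(a,z)=\mathbb{E}_{Q_0}[Y(a)\mid Z=z]$, $\beta_0=\mathbb{E}_{Q_0}[Y(1)-Y(0)]$. With measurable $\mathbb{S}:\mathbb{R}^k\to\{1,\dots,\mathcal{S}\}$ and $\pi(s)\in(0,1)$, $\mathbf{P}$ is the family of laws of $X=(Y,A,Z)$ with $W\sim Q\in\mathbf{Q}$, $A$ conditionally independent of $W$ given $\mathbb{S}(Z)$, $A\mid\mathbb{S}(Z)=s\sim$ Bernoulli$(\pi(s))$, $Y=Y(1)A+Y(0)(1-A)$; $P_0$ corresponds to $Q_0$. A regular parametric submodel: $P_\theta$ has $\nu$-density $[q_1(y,z;\theta)\pi(\mathbb{S}(z))]^a[q_0(y,z;\theta)(1-\pi(\mathbb{S}(z)))]^{1-a}$ with $q_0(\cdot;\theta),q_1(\cdot;\theta)$ sharing a common $Z$-marginal, each $\theta\mapsto\sqrt{q_a(\cdot;\theta)}$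 differentiable in quadratic mean in $L_2(\nu_a)$ at $\theta_0$ with derivative $D_a$ and nonsingular $4\int D_aD_a'd\nu_a$. Score: $\dot\ell(y,a,z;\theta_0)=a\dot\ell_1(y,z)+(1-a)\dot\ell_0(y,z)$ with $\dot\ell_a=2D_aq_a(\cdot;Q_0)^{-1/2}\mathbb{I}\{q_a(\cdot;Q_0)>0\}$. $\dot{\mathbf{P}}$ is the set of $h\in L_2(P_0)$ with $\int h(y,a,z)q_a(y,z;Q_0)\nu_a(dy,dz)=0$ for each $a$ and $\int h(y,1,z)q_1(y,z;Q_0)\mu_1(dy)=\int h(y,0,z)q_0(y,z;Q_0)\mu_0(dy)$ for $\mu_Z$-a.e. $z$ (the tangent space of $\mathbf{P}$ at $P_0$). *)

theory Defs
  imports "HOL-Analysis.Analysis"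
begin

text \<open>Observations X = (Y, A, Z) with Y real, A in {0,1} (encoded as nat), Z in real^'k.
  Functions of the observation are written curried as f y a z.\<close>

definition nuA :: "real measure \<Rightarrow> real measure \<Rightarrow> (real, 'k::finite) vec measure \<Rightarrow> nat
    \<Rightarrow> (real \<times> (real, 'k) vec) measure" where
  "nuA \<mu>0 \<mu>1 \<mu>Z a = (if a = 1 then \<mu>1 else \<mu>0) \<Otimes>\<^sub>M \<mu>Z"

definition pw :: "(nat \<Rightarrow> real) \<Rightarrow> ('z \<Rightarrow> nat) \<Rightarrow> nat \<Rightarrow> 'z \<Rightarrow> real" where
  "pw \<pi> S a z = (if a = 1 then \<pi> (S z) else 1 - \<pi> (S z))"

text \<open>Expectation under the law P with nu-density
  [q_1(y,z) pi(S z)]^a [q_0(y,z)(1 - pi(S z))]^(1-a), i.e. the integral against nu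
  written as the sum over a in {0,1} of the nu_a integrals.\<close>
definition EP :: "real measure \<Rightarrow> real measure \<Rightarrow> (real, 'k::finite) vec measure
    \<Rightarrow> (nat \<Rightarrow> real) \<Rightarrow> ((real, 'k) vec \<Rightarrow> nat)
    \<Rightarrow> (nat \<Rightarrow> real \<times> (real, 'k) vec \<Rightarrow> real)
    \<Rightarrow> (real \<Rightarrow> nat \<Rightarrow> (real, 'k) vec \<Rightarrow> 'b::{banach, second_countable_topology}) \<Rightarrow> 'b" where
  "EP \<mu>0 \<mu>1 \<mu>Z \<pi> S q f =
     (\<Sum>a\<in>{0,1}. \<integral>x. (q a x * pw \<pi> S a (snd x)) *\<^sub>R f (fst x) a (snd x) \<partial>(nuA \<mu>0 \<mu>1 \<mu>Z a))"

definition L2P :: "real measure \<Rightarrow> real measure \<Rightarrow> (real, 'k::finite) vec measure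
    \<Rightarrow> (nat \<Rightarrow> real) \<Rightarrow> ((real, 'k) vec \<Rightarrow> nat)
    \<Rightarrow> (nat \<Rightarrow> real \<times> (real, 'k) vec \<Rightarrow> real)
    \<Rightarrow> (real \<Rightarrow> nat \<Rightarrow> (real, 'k) vec \<Rightarrow> real) \<Rightarrow> bool" where
  "L2P \<mu>0 \<mu>1 \<mu>Z \<pi> S q h \<longleftrightarrow>
     (\<forall>a\<in>{0,1}. (\<lambda>x. h (fst x) a (snd x)) \<in> borel_measurable (nuA \<mu>0 \<mu>1 \<mu>Z a) \<and>
        integrable (nuA \<mu>0 \<mu>1 \<mu>Z a) (\<lambda>x. q a x * pw \<pi> S a (snd x) * (h (fst x) a (snd x))\<^sup>2))"

definition tangent_space :: "real measure \<Rightarrow> real measure \<Rightarrow> (real, 'k::finite) vec measure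
    \<Rightarrow> (nat \<Rightarrow> real) \<Rightarrow> ((real, 'k) vec \<Rightarrow> nat)
    \<Rightarrow> (nat \<Rightarrow> real \<times> (real, 'k) vec \<Rightarrow> real)
    \<Rightarrow> (real \<Rightarrow> nat \<Rightarrow> (real, 'k) vec \<Rightarrow> real) set" where
  "tangent_space \<mu>0 \<mu>1 \<mu>Z \<pi> S q0 =
     {h. L2P \<mu>0 \<mu>1 \<mu>Z \<pi> S q0 h \<and>
         (\<forall>a\<in>{0,1}. (\<integral>x. h (fst x) a (snd x) * q0 a x \<partial>(nuA \<mu>0 \<mu>1 \<mu>Z a)) = 0) \<and>
         (AE z in \<mu>Z. (\<integral>y. h y 1 z * q0 1 (y, z) \<partial>\<mu>1) = (\<integral>y. h y 0 z * q0 0 (y, z) \<partial>\<mu>0))}"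

definition is_L2_projection where
  "is_L2_projection \<mu>0 \<mu>1 \<mu>Z \<pi> S q0 T f g \<longleftrightarrow>
     g \<in> T \<and> (\<forall>h\<in>T. EP \<mu>0 \<mu>1 \<mu>Z \<pi> S q0 (\<lambda>y a z. (f y a z - g y a z) * h y a z) = (0::real))"

definition dqm :: "((real, 'd::finite) vec \<Rightarrow> 'x \<Rightarrow> real) \<Rightarrow> 'x measure \<Rightarrow> (real, 'd) vec set
    \<Rightarrow> (real, 'd) vec \<Rightarrow> ('x \<Rightarrow> (real, 'd) vec) \<Rightarrow> bool" where
  "dqm f M \<Theta> \<theta>0 D \<longleftrightarrow>
     (\<forall>\<theta>\<in>\<Theta>. f \<theta> \<in> borel_measurable M \<and> integrable M (\<lambda>x. (f \<theta> x)\<^sup>2)) \<and>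
     D \<in> borel_measurable M \<and> (\<forall>i. integrable M (\<lambda>x. (D x $ i)\<^sup>2)) \<and>
     ((\<lambda>\<theta>. sqrt (\<integral>x. (f \<theta> x - f \<theta>0 x - (\<theta> - \<theta>0) \<bullet> D x)\<^sup>2 \<partial>M) / norm (\<theta> - \<theta>0))
        \<longlongrightarrow> 0) (at \<theta>0 within \<Theta>)"

definition info_matrix :: "'x measure \<Rightarrow> ('x \<Rightarrow> (real, 'd::finite) vec) \<Rightarrow> real ^ 'd ^ 'd" where
  "info_matrix M D = (\<chi> i j. 4 * (\<integral>x. D x $ i * D x $ j \<partial>M))"

definition score_a :: "(nat \<Rightarrow> 'x \<Rightarrow> real) \<Rightarrow> (nat \<Rightarrow> 'x \<Rightarrow> (real, 'd::finite) vec)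
    \<Rightarrow> nat \<Rightarrow> 'x \<Rightarrow> (real, 'd) vec" where
  "score_a q0 D a x = (if q0 a x > 0 then (2 / sqrt (q0 a x)) *\<^sub>R D a x else 0)"

definition score :: "(nat \<Rightarrow> real \<times> 'z \<Rightarrow> real) \<Rightarrow> (nat \<Rightarrow> real \<times> 'z \<Rightarrow> (real, 'd::finite) vec)
    \<Rightarrow> real \<Rightarrow> nat \<Rightarrow> 'z \<Rightarrow> (real, 'd) vec" where
  "score q0 D y a z = real a *\<^sub>R score_a q0 D 1 (y, z) + (1 - real a) *\<^sub>R score_a q0 D 0 (y, z)"

definition phi1 :: "(nat \<Rightarrow> real) \<Rightarrow> ('z \<Rightarrow> nat) \<Rightarrow> real \<Rightarrow> nat \<Rightarrow> 'z \<Rightarrow> real" where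
  "phi1 \<pi> S y a z = y * real a / \<pi> (S z) - y * (1 - real a) / (1 - \<pi> (S z))"

text \<open>m_*(a,z) = E_{Q_0}[Y(a) | Z = z], computed from the density q_a(.;Q_0) of (Y(a), Z)\<close>
definition cond_mean :: "real measure \<Rightarrow> (real \<times> 'z \<Rightarrow> real) \<Rightarrow> 'z \<Rightarrow> real" where
  "cond_mean \<mu>a qa z = (\<integral>y. y * qa (y, z) \<partial>\<mu>a) / (\<integral>y. qa (y, z) \<partial>\<mu>a)"

definition phi0 :: "real measure \<Rightarrow> real measure \<Rightarrow> (nat \<Rightarrow> real) \<Rightarrow> ('z \<Rightarrow> nat)
    \<Rightarrow> (nat \<Rightarrow> real \<times> 'z \<Rightarrow> real) \<Rightarrow> real \<Rightarrow> real \<Rightarrow> nat \<Rightarrow> 'z \<Rightarrow> real" where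
  "phi0 \<mu>0 \<mu>1 \<pi> S q0 \<beta>0 y a z =
     real a / \<pi> (S z) * (y - cond_mean \<mu>1 (q0 1) z)
     - (1 - real a) / (1 - \<pi> (S z)) * (y - cond_mean \<mu>0 (q0 0) z)
     + cond_mean \<mu>1 (q0 1) z - cond_mean \<mu>0 (q0 0) z - \<beta>0"

end

theory Submission
  imports Defs
begin

(* Because A is randomised within strata, the IPW functional equals the difference of the outcome
   moments of the two arms, each the integral of y q_a(y, z; theta). Writing q_a = s_a^2 with s_a
   differentiable in quadratic mean, such a moment has gradient the integral of 2 y s_a D_a, i.e.
   E[Y(a) times the score of arm a], and the weights pi(S z) turn the difference of these into
   E[phi_1 times the score]. For the projection, integrating phi_0 over y in either arm leaves
   (m_1 - m_0 - beta_0) times the covariate density, which has mean zero, so phi_0 is in the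
   tangent space; and pi-weighted, phi_1 - phi_0 depends on z only, so against any h in the tangent
   space both arms see the same fibre integral of h and the inner product collapses to beta_0 times
   the mean of h, which is zero. *)

section \<open>Square-integrable functions\<close>

definition square_integrable :: "'a measure \<Rightarrow> ('a \<Rightarrow> real) \<Rightarrow> bool" where
  "square_integrable M u \<longleftrightarrow> u \<in> borel_measurable M \<and> integrable M (\<lambda>x. (u x)\<^sup>2)"

definition norm_L2 :: "'a measure \<Rightarrow> ('a \<Rightarrow> real) \<Rightarrow> real" where
  "norm_L2 M u = sqrt (\<integral>x. (u x)\<^sup>2 \<partial>M)"

lemma square_integrableD:
  assumes "square_integrable M u"
  shows "u \<in> borel_measurable M" "integrable M (\<lambda>x. (u x)\<^sup>2)"
  using assms by (auto simp: square_integrable_def)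

lemma norm_L2_nonneg: "0 \<le> norm_L2 M u"
  by (simp add: norm_L2_def)

lemma norm_L2_square: "(norm_L2 M u)\<^sup>2 = (\<integral>x. (u x)\<^sup>2 \<partial>M)"
  by (simp add: norm_L2_def)

lemma square_integrable_mult_integrable:
  assumes u: "square_integrable M u" and v: "square_integrable M v"
  shows "integrable M (\<lambda>x. u x * v x)"
proof (rule Bochner_Integration.integrable_bound)
  show "integrable M (\<lambda>x. ((u x)\<^sup>2 + (v x)\<^sup>2) / 2)"
    using u v by (auto simp: square_integrable_def)
  show "(\<lambda>x. u x * v x) \<in> borel_measurable M"
    using u v by (auto simp: square_integrable_def)
  show "AE x in M. norm (u x * v x) \<le> norm (((u x)\<^sup>2 + (v x)\<^sup>2) / 2)"
  proof (rule AE_I2)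
    fix x
    show "norm (u x * v x) \<le> norm (((u x)\<^sup>2 + (v x)\<^sup>2) / 2)"
      using sum_squares_bound[of "\<bar>u x\<bar>" "\<bar>v x\<bar>"] by (simp add: abs_mult mult_ac)
  qed
qed

lemma integral_abs_mult_le_norm_L2:
  assumes u: "square_integrable M u" and v: "square_integrable M v"
  shows "(\<integral>x. \<bar>u x * v x\<bar> \<partial>M) \<le> norm_L2 M u * norm_L2 M v"
proof -
  note [measurable] = square_integrableD(1)[OF u] square_integrableD(1)[OF v]
  have "(\<integral>\<^sup>+x. ennreal \<bar>u x\<bar> * ennreal \<bar>v x\<bar> \<partial>M) = (\<integral>\<^sup>+x. ennreal \<bar>u x * v x\<bar> \<partial>M)"
    by (simp add: ennreal_mult abs_mult)
  also have "\<dots> = ennreal (\<integral>x. \<bar>u x * v x\<bar> \<partial>M)"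
    using integrable_abs[OF square_integrable_mult_integrable[OF u v]]
    by (rule nn_integral_eq_integral) simp
  finally have "ennreal ((\<integral>x. \<bar>u x * v x\<bar> \<partial>M)\<^sup>2) = (\<integral>\<^sup>+x. ennreal \<bar>u x\<bar> * ennreal \<bar>v x\<bar> \<partial>M)\<^sup>2"
    by (simp add: ennreal_power)
  also have "\<dots> \<le> (\<integral>\<^sup>+x. (ennreal \<bar>u x\<bar>)\<^sup>2 \<partial>M) * (\<integral>\<^sup>+x. (ennreal \<bar>v x\<bar>)\<^sup>2 \<partial>M)"
    by (rule Cauchy_Schwarz_nn_integral) measurable
  also have "\<dots> = ennreal ((norm_L2 M u)\<^sup>2 * (norm_L2 M v)\<^sup>2)"
  proof -
    have "(\<integral>\<^sup>+x. (ennreal \<bar>w x\<bar>)\<^sup>2 \<partial>M) = ennreal ((norm_L2 M w)\<^sup>2)"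
      if "square_integrable M w" for w
    proof -
      have "(\<integral>\<^sup>+x. (ennreal \<bar>w x\<bar>)\<^sup>2 \<partial>M) = (\<integral>\<^sup>+x. ennreal ((w x)\<^sup>2) \<partial>M)"
        by (simp add: ennreal_power)
      also have "\<dots> = ennreal ((norm_L2 M w)\<^sup>2)"
        unfolding norm_L2_square using square_integrableD(2)[OF that]
        by (rule nn_integral_eq_integral) simp
      finally show ?thesis .
    qed
    then show ?thesis using u v by (simp add: ennreal_mult)
  qed
  finally have "(\<integral>x. \<bar>u x * v x\<bar> \<partial>M)\<^sup>2 \<le> (norm_L2 M u * norm_L2 M v)\<^sup>2"
    by (simp add: power_mult_distrib)
  then show ?thesis
    using norm_L2_nonneg[of M u] norm_L2_nonneg[of M v] by (simp add: power2_le_iff_abs_le)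
qed

lemma square_integrable_add:
  assumes u: "square_integrable M u" and v: "square_integrable M v"
  shows "square_integrable M (\<lambda>x. u x + v x)"
proof -
  have "integrable M (\<lambda>x. (u x)\<^sup>2 + 2 * (u x * v x) + (v x)\<^sup>2)"
    using u v square_integrable_mult_integrable[OF u v] by (auto simp: square_integrable_def)
  then show ?thesis
    using u v by (auto simp: square_integrable_def power2_sum algebra_simps)
qed

lemma square_integrable_cmult:
  "square_integrable M u \<Longrightarrow> square_integrable M (\<lambda>x. c * u x)"
  by (auto simp: square_integrable_def power_mult_distrib)

lemma square_integrable_diff:
  "square_integrable M u \<Longrightarrow> square_integrable M v \<Longrightarrow> square_integrable M (\<lambda>x. u x - v x)"
  using square_integrable_add[of M u "\<lambda>x. -1 * v x"] square_integrable_cmult[of M v "-1"] by simp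

lemma square_integrable_dominated:
  assumes "square_integrable M u" "v \<in> borel_measurable M" "\<And>x. \<bar>v x\<bar> \<le> \<bar>u x\<bar>"
  shows "square_integrable M v"
  unfolding square_integrable_def
proof
  show "integrable M (\<lambda>x. (v x)\<^sup>2)"
    by (rule Bochner_Integration.integrable_bound[OF square_integrableD(2)[OF assms(1)]])
      (use assms in \<open>auto simp: abs_le_square_iff\<close>)
qed fact

lemma square_integrable_bounded_mult:
  assumes "square_integrable M u" "w \<in> borel_measurable M" "\<And>x. \<bar>w x\<bar> \<le> B"
  shows "square_integrable M (\<lambda>x. w x * u x)"
proof (rule square_integrable_dominated[OF square_integrable_cmult[OF assms(1), of B]])
  show "(\<lambda>x. w x * u x) \<in> borel_measurable M"
    using assms square_integrableD(1) by measurable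
  show "\<bar>w x * u x\<bar> \<le> \<bar>B * u x\<bar>" for x
    using assms(3)[of x] by (simp add: abs_mult mult_right_mono)
qed

lemma norm_L2_add_le:
  assumes u: "square_integrable M u" and v: "square_integrable M v"
  shows "norm_L2 M (\<lambda>x. u x + v x) \<le> norm_L2 M u + norm_L2 M v"
proof -
  have "(\<integral>x. (u x + v x)\<^sup>2 \<partial>M) = (\<integral>x. (u x)\<^sup>2 + 2 * (u x * v x) + (v x)\<^sup>2 \<partial>M)"
    by (simp add: power2_sum algebra_simps)
  also have "\<dots> = (norm_L2 M u)\<^sup>2 + 2 * (\<integral>x. u x * v x \<partial>M) + (norm_L2 M v)\<^sup>2"
    using u v square_integrable_mult_integrable[OF u v]
    by (simp add: norm_L2_square square_integrable_def)
  also have "(\<integral>x. u x * v x \<partial>M) \<le> norm_L2 M u * norm_L2 M v"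
    using integral_abs_mult_le_norm_L2[OF u v] integral_abs_bound[of M "\<lambda>x. u x * v x"]
    by linarith
  finally have "(norm_L2 M (\<lambda>x. u x + v x))\<^sup>2 \<le> (norm_L2 M u + norm_L2 M v)\<^sup>2"
    by (simp add: norm_L2_square power2_sum algebra_simps)
  then show ?thesis
    using norm_L2_nonneg[of M u] norm_L2_nonneg[of M v] by (simp add: power2_le_iff_abs_le)
qed

lemma norm_L2_mono:
  assumes "square_integrable M v" "u \<in> borel_measurable M" "\<And>x. \<bar>u x\<bar> \<le> \<bar>v x\<bar>"
  shows "norm_L2 M u \<le> norm_L2 M v"
proof -
  have "square_integrable M u" by (rule square_integrable_dominated[OF assms])
  then have "(\<integral>x. (u x)\<^sup>2 \<partial>M) \<le> (\<integral>x. (v x)\<^sup>2 \<partial>M)"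
    using assms by (intro integral_mono) (auto simp: square_integrable_def abs_le_square_iff)
  then show ?thesis by (simp add: norm_L2_def)
qed

lemma norm_L2_cmult: "norm_L2 M (\<lambda>x. c * u x) = \<bar>c\<bar> * norm_L2 M u"
  by (simp add: norm_L2_def power_mult_distrib real_sqrt_mult)

lemma norm_L2_truncation_tendsto_zero:
  assumes N: "square_integrable M N" and [measurable]: "g \<in> borel_measurable M"
  shows "(\<lambda>n. norm_L2 M (\<lambda>x. if real n < \<bar>g x\<bar> then N x else 0)) \<longlonglongrightarrow> 0"
proof -
  note [measurable] = square_integrableD(1)[OF N]
  have "(\<lambda>n. \<integral>x. (if real n < \<bar>g x\<bar> then N x else 0)\<^sup>2 \<partial>M) \<longlonglongrightarrow> (\<integral>x. 0 \<partial>M)"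
  proof (rule integral_dominated_convergence[where w = "\<lambda>x. (N x)\<^sup>2"])
    show "AE x in M. (\<lambda>n. (if real n < \<bar>g x\<bar> then N x else 0)\<^sup>2) \<longlonglongrightarrow> 0"
    proof (intro AE_I2 tendsto_eventually)
      fix x
      show "\<forall>\<^sub>F n in sequentially. (if real n < \<bar>g x\<bar> then N x else 0)\<^sup>2 = 0"
        using eventually_ge_at_top[of "nat \<lceil>\<bar>g x\<bar>\<rceil>"]
      proof eventually_elim
        case (elim n)
        then have "\<bar>g x\<bar> \<le> real n" by linarith
        then show ?case by simp
      qed
    qed
  qed (use square_integrableD(2)[OF N] in auto)
  from tendsto_real_sqrt[OF this] show ?thesis by (simp add: norm_L2_def)
qed

lemma integral_abs_truncated_le:
  assumes N: "square_integrable M N" and [measurable]: "g \<in> borel_measurable M"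
    and u: "square_integrable M u" and gu: "square_integrable M (\<lambda>x. g x * u x)"
  shows "(\<integral>x. \<bar>N x * (g x * u x)\<bar> \<partial>M)
    \<le> real n * (norm_L2 M N * norm_L2 M u)
       + norm_L2 M (\<lambda>x. if real n < \<bar>g x\<bar> then N x else 0) * norm_L2 M (\<lambda>x. g x * u x)"
proof -
  define tN where "tN x = (if real n < \<bar>g x\<bar> then N x else 0)" for x
  have [measurable]: "N \<in> borel_measurable M" "tN \<in> borel_measurable M"
    using square_integrableD(1)[OF N] unfolding tN_def by measurable
  have tN: "square_integrable M tN"
    by (rule square_integrable_dominated[OF N]) (auto simp: tN_def)
  have i1: "integrable M (\<lambda>x. \<bar>N x * u x\<bar>)" and i2: "integrable M (\<lambda>x. \<bar>tN x * (g x * u x)\<bar>)"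
    using square_integrable_mult_integrable[OF N u] square_integrable_mult_integrable[OF tN gu] by auto
  have "(\<integral>x. \<bar>N x * (g x * u x)\<bar> \<partial>M) \<le> (\<integral>x. real n * \<bar>N x * u x\<bar> + \<bar>tN x * (g x * u x)\<bar> \<partial>M)"
  proof (rule integral_mono)
    show "integrable M (\<lambda>x. \<bar>N x * (g x * u x)\<bar>)"
      using square_integrable_mult_integrable[OF N gu] by auto
    show "\<bar>N x * (g x * u x)\<bar> \<le> real n * \<bar>N x * u x\<bar> + \<bar>tN x * (g x * u x)\<bar>" for x
      using mult_right_mono[of "\<bar>g x\<bar>" "real n" "\<bar>N x * u x\<bar>"] by (auto simp: tN_def abs_mult mult_ac)
  qed (use i1 i2 in auto)
  also have "\<dots> = real n * (\<integral>x. \<bar>N x * u x\<bar> \<partial>M) + (\<integral>x. \<bar>tN x * (g x * u x)\<bar> \<partial>M)"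
    using i1 i2 by simp
  also have "\<dots> \<le> real n * (norm_L2 M N * norm_L2 M u) + norm_L2 M tN * norm_L2 M (\<lambda>x. g x * u x)"
    using integral_abs_mult_le_norm_L2[OF N u] integral_abs_mult_le_norm_L2[OF tN gu]
    by (intro add_mono mult_left_mono) auto
  finally show ?thesis unfolding tN_def[abs_def] .
qed

(* Uniform integrability: u is small in L2 while g u stays bounded in L2, so truncating g at a
   fixed level n makes both terms of the previous bound small. *)
lemma integral_abs_cross_term_tendsto_zero:
  assumes N: "square_integrable M N" and g: "g \<in> borel_measurable M"
    and u: "\<forall>\<^sub>F \<theta> in F. square_integrable M (u \<theta>) \<and> square_integrable M (\<lambda>x. g x * u \<theta> x)
              \<and> norm_L2 M (\<lambda>x. g x * u \<theta> x) \<le> B"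
    and small: "((\<lambda>\<theta>. norm_L2 M (u \<theta>)) \<longlongrightarrow> 0) F"
  shows "((\<lambda>\<theta>. \<integral>x. \<bar>N x * (g x * u \<theta> x)\<bar> \<partial>M) \<longlongrightarrow> 0) F"
proof (rule order_tendstoI)
  show "\<forall>\<^sub>F \<theta> in F. a < (\<integral>x. \<bar>N x * (g x * u \<theta> x)\<bar> \<partial>M)" if "a < 0" for a
    using that by (intro always_eventually allI) (simp add: less_le_trans)
next
  fix e :: real assume "0 < e"
  define tail where "tail n = norm_L2 M (\<lambda>x. if real n < \<bar>g x\<bar> then N x else 0)" for n :: nat
  have "(\<lambda>n. tail n * B) \<longlonglongrightarrow> 0 * B"
    unfolding tail_def by (intro tendsto_intros norm_L2_truncation_tendsto_zero N g)
  then have "\<forall>\<^sub>F n in sequentially. tail n * B < e / 2"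
    using \<open>0 < e\<close> by (intro order_tendstoD(2)) auto
  then obtain n where n: "tail n * B < e / 2"
    by (auto simp: eventually_sequentially)
  have "((\<lambda>\<theta>. real n * (norm_L2 M N * norm_L2 M (u \<theta>))) \<longlongrightarrow> real n * (norm_L2 M N * 0)) F"
    by (intro tendsto_intros small)
  then have "\<forall>\<^sub>F \<theta> in F. real n * (norm_L2 M N * norm_L2 M (u \<theta>)) < e / 2"
    using \<open>0 < e\<close> by (intro order_tendstoD(2)) auto
  with u show "\<forall>\<^sub>F \<theta> in F. (\<integral>x. \<bar>N x * (g x * u \<theta> x)\<bar> \<partial>M) < e"
  proof eventually_elim
    case (elim \<theta>)
    then have "tail n * norm_L2 M (\<lambda>x. g x * u \<theta> x) \<le> tail n * B"
      by (intro mult_left_mono) (auto simp: tail_def norm_L2_nonneg)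
    then show ?case
      using integral_abs_truncated_le[OF N g, of "u \<theta>" n] elim n unfolding tail_def by linarith
  qed
qed

section \<open>Differentiating moments under differentiability in quadratic mean\<close>

lemma has_derivative_within_remainder_bound:
  fixes f :: "'a::real_normed_vector \<Rightarrow> 'b::real_normed_vector"
  assumes "bounded_linear f'"
    and bound: "\<forall>\<^sub>F y in at x within S. norm (f y - f x - f' (y - x)) \<le> norm (y - x) * e y"
    and e: "(e \<longlongrightarrow> 0) (at x within S)"
  shows "(f has_derivative f') (at x within S)"
  unfolding has_derivative_within
proof (intro conjI assms(1) Lim_null_comparison[OF _ e])
  have "\<forall>\<^sub>F y in at x within S. y \<noteq> x"
    by (simp add: eventually_at_filter)
  with bound show "\<forall>\<^sub>F y in at x within S. norm ((1 / norm (y - x)) *\<^sub>R (f y - (f x + f' (y - x)))) \<le> e y"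
  proof eventually_elim
    case (elim y)
    then have "0 < norm (y - x)" by simp
    with elim(1) show ?case by (simp add: pos_divide_le_eq diff_diff_eq mult.commute)
  qed
qed

lemma dqm_square_integrable:
  "dqm f M \<Theta> \<theta>0 D \<Longrightarrow> \<theta> \<in> \<Theta> \<Longrightarrow> square_integrable M (f \<theta>)"
  by (simp add: dqm_def square_integrable_def)

lemma dqm_square_integrable_norm:
  assumes "dqm f M \<Theta> \<theta>0 D"
  shows "square_integrable M (\<lambda>x. norm (D x))"
proof -
  have [measurable]: "D \<in> borel_measurable M" using assms by (simp add: dqm_def)
  have "integrable M (\<lambda>x. \<Sum>i\<in>UNIV. (D x $ i)\<^sup>2)"
    using assms by (auto simp: dqm_def)
  moreover have "(norm (D x))\<^sup>2 = (\<Sum>i\<in>UNIV. (D x $ i)\<^sup>2)" for x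
    unfolding power2_norm_eq_inner inner_vec_def by (simp add: power2_eq_square)
  ultimately show ?thesis by (simp add: square_integrable_def)
qed

lemma dqm_square_integrable_inner:
  assumes "dqm f M \<Theta> \<theta>0 D"
  shows "square_integrable M (\<lambda>x. h \<bullet> D x)"
    and "norm_L2 M (\<lambda>x. h \<bullet> D x) \<le> norm h * norm_L2 M (\<lambda>x. norm (D x))"
proof -
  have [measurable]: "D \<in> borel_measurable M" using assms by (simp add: dqm_def)
  have N: "square_integrable M (\<lambda>x. norm h * norm (D x))"
    using square_integrable_cmult[OF dqm_square_integrable_norm[OF assms]] .
  have le: "\<bar>h \<bullet> D x\<bar> \<le> \<bar>norm h * norm (D x)\<bar>" for x
    using Cauchy_Schwarz_ineq2[of h "D x"] by simp
  show "square_integrable M (\<lambda>x. h \<bullet> D x)"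
    by (rule square_integrable_dominated[OF N _ le]) measurable
  show "norm_L2 M (\<lambda>x. h \<bullet> D x) \<le> norm h * norm_L2 M (\<lambda>x. norm (D x))"
    using norm_L2_mono[OF N _ le] by (simp add: norm_L2_cmult)
qed

lemma dqm_remainder_tendsto_zero:
  "dqm f M \<Theta> \<theta>0 D \<Longrightarrow>
   ((\<lambda>\<theta>. norm_L2 M (\<lambda>x. f \<theta> x - f \<theta>0 x - (\<theta> - \<theta>0) \<bullet> D x) / norm (\<theta> - \<theta>0)) \<longlongrightarrow> 0)
     (at \<theta>0 within \<Theta>)"
  by (simp add: dqm_def norm_L2_def)

lemma dqm_norm_L2_tendsto_zero:
  assumes dqm: "dqm f M \<Theta> \<theta>0 D" and "\<theta>0 \<in> \<Theta>"
  shows "((\<lambda>\<theta>. norm_L2 M (\<lambda>x. f \<theta> x - f \<theta>0 x)) \<longlongrightarrow> 0) (at \<theta>0 within \<Theta>)"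
proof (rule tendsto_sandwich[of "\<lambda>_. 0"])
  define R where "R \<theta> = norm_L2 M (\<lambda>x. f \<theta> x - f \<theta>0 x - (\<theta> - \<theta>0) \<bullet> D x)" for \<theta>
  define N where "N = norm_L2 M (\<lambda>x. norm (D x))"
  have "\<forall>\<^sub>F \<theta> in at \<theta>0 within \<Theta>. \<theta> \<in> \<Theta> \<and> \<theta> \<noteq> \<theta>0"
    by (simp add: eventually_at_filter)
  then show "\<forall>\<^sub>F \<theta> in at \<theta>0 within \<Theta>.
      norm_L2 M (\<lambda>x. f \<theta> x - f \<theta>0 x) \<le> norm (\<theta> - \<theta>0) * N + R \<theta> / norm (\<theta> - \<theta>0) * norm (\<theta> - \<theta>0)"
  proof eventually_elim
    case (elim \<theta>)
    have r: "square_integrable M (\<lambda>x. f \<theta> x - f \<theta>0 x - (\<theta> - \<theta>0) \<bullet> D x)"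
      using elim assms
      by (intro square_integrable_diff dqm_square_integrable[OF dqm] dqm_square_integrable_inner(1)[OF dqm])
        auto
    have "norm_L2 M (\<lambda>x. f \<theta> x - f \<theta>0 x)
        = norm_L2 M (\<lambda>x. (\<theta> - \<theta>0) \<bullet> D x + (f \<theta> x - f \<theta>0 x - (\<theta> - \<theta>0) \<bullet> D x))"
      by simp
    also have "\<dots> \<le> norm_L2 M (\<lambda>x. (\<theta> - \<theta>0) \<bullet> D x) + R \<theta>"
      unfolding R_def by (rule norm_L2_add_le[OF dqm_square_integrable_inner(1)[OF dqm] r])
    also have "\<dots> \<le> norm (\<theta> - \<theta>0) * N + R \<theta>"
      using dqm_square_integrable_inner(2)[OF dqm, of "\<theta> - \<theta>0"] by (simp add: N_def)
    finally show ?case using elim by simp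
  qed
  have "((\<lambda>\<theta>. norm (\<theta> - \<theta>0) * N + R \<theta> / norm (\<theta> - \<theta>0) * norm (\<theta> - \<theta>0)) \<longlongrightarrow> 0 * N + 0 * 0)
      (at \<theta>0 within \<Theta>)"
    using dqm_remainder_tendsto_zero[OF dqm] unfolding R_def
    by (intro tendsto_intros tendsto_norm_zero LIM_zero tendsto_ident_at)
  then show "((\<lambda>\<theta>. norm (\<theta> - \<theta>0) * N + R \<theta> / norm (\<theta> - \<theta>0) * norm (\<theta> - \<theta>0)) \<longlongrightarrow> 0)
      (at \<theta>0 within \<Theta>)"
    by simp
qed (simp_all add: norm_L2_nonneg)

(* With s - s0 = L + r, the integrand g s\<^sup>2 - g s0\<^sup>2 - 2 g s0 L equals L g (s - s0) + r g (s + s0). *)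
lemma integral_square_difference_bound:
  assumes s: "square_integrable M s" and s0: "square_integrable M s0"
    and gs: "square_integrable M (\<lambda>x. g x * s x)" and gs0: "square_integrable M (\<lambda>x. g x * s0 x)"
    and L: "square_integrable M L" and N: "square_integrable M N"
    and LN: "\<And>x. \<bar>L x\<bar> \<le> c * \<bar>N x\<bar>"
  shows "\<bar>(\<integral>x. g x * (s x)\<^sup>2 \<partial>M) - (\<integral>x. g x * (s0 x)\<^sup>2 \<partial>M) - (\<integral>x. 2 * g x * s0 x * L x \<partial>M)\<bar>
    \<le> c * (\<integral>x. \<bar>N x * (g x * (s x - s0 x))\<bar> \<partial>M)
       + norm_L2 M (\<lambda>x. s x - s0 x - L x) * norm_L2 M (\<lambda>x. g x * (s x + s0 x))"
proof -
  have gd: "square_integrable M (\<lambda>x. g x * (s x - s0 x))"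
    using square_integrable_diff[OF gs gs0] by (simp add: right_diff_distrib)
  have gp: "square_integrable M (\<lambda>x. g x * (s x + s0 x))"
    using square_integrable_add[OF gs gs0] by (simp add: distrib_left)
  have r: "square_integrable M (\<lambda>x. s x - s0 x - L x)"
    by (intro square_integrable_diff s s0 L)
  have iL: "integrable M (\<lambda>x. L x * (g x * (s x - s0 x)))"
    and ir: "integrable M (\<lambda>x. (s x - s0 x - L x) * (g x * (s x + s0 x)))"
    and iN: "integrable M (\<lambda>x. N x * (g x * (s x - s0 x)))"
    using L N r gd gp by (auto intro: square_integrable_mult_integrable)
  have "integrable M (\<lambda>x. g x * (s x)\<^sup>2)" "integrable M (\<lambda>x. g x * (s0 x)\<^sup>2)"
    using square_integrable_mult_integrable[OF gs s] square_integrable_mult_integrable[OF gs0 s0]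
    by (simp_all add: power2_eq_square mult.assoc)
  moreover have "integrable M (\<lambda>x. 2 * g x * s0 x * L x)"
    using integrable_mult_right[OF square_integrable_mult_integrable[OF gs0 L], of 2]
    by (simp add: mult.assoc)
  ultimately have "(\<integral>x. g x * (s x)\<^sup>2 \<partial>M) - (\<integral>x. g x * (s0 x)\<^sup>2 \<partial>M) - (\<integral>x. 2 * g x * s0 x * L x \<partial>M)
      = (\<integral>x. g x * (s x)\<^sup>2 - g x * (s0 x)\<^sup>2 - 2 * g x * s0 x * L x \<partial>M)"
    by simp
  also have "\<dots> = (\<integral>x. L x * (g x * (s x - s0 x)) + (s x - s0 x - L x) * (g x * (s x + s0 x)) \<partial>M)"
    by (rule Bochner_Integration.integral_cong) (simp_all add: power2_eq_square algebra_simps)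
  also have "\<dots> = (\<integral>x. L x * (g x * (s x - s0 x)) \<partial>M) + (\<integral>x. (s x - s0 x - L x) * (g x * (s x + s0 x)) \<partial>M)"
    using iL ir by simp
  finally have "\<bar>(\<integral>x. g x * (s x)\<^sup>2 \<partial>M) - (\<integral>x. g x * (s0 x)\<^sup>2 \<partial>M) - (\<integral>x. 2 * g x * s0 x * L x \<partial>M)\<bar>
      \<le> (\<integral>x. \<bar>L x * (g x * (s x - s0 x))\<bar> \<partial>M) + (\<integral>x. \<bar>(s x - s0 x - L x) * (g x * (s x + s0 x))\<bar> \<partial>M)"
    using integral_abs_bound[of M "\<lambda>x. L x * (g x * (s x - s0 x))"]
      integral_abs_bound[of M "\<lambda>x. (s x - s0 x - L x) * (g x * (s x + s0 x))"]
    by linarith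
  also have "(\<integral>x. \<bar>L x * (g x * (s x - s0 x))\<bar> \<partial>M) \<le> (\<integral>x. c * \<bar>N x * (g x * (s x - s0 x))\<bar> \<partial>M)"
  proof (rule integral_mono)
    show "\<bar>L x * (g x * (s x - s0 x))\<bar> \<le> c * \<bar>N x * (g x * (s x - s0 x))\<bar>" for x
      using mult_right_mono[OF LN[of x] abs_ge_zero[of "g x * (s x - s0 x)"]]
      by (simp add: abs_mult mult.assoc)
  qed (use iL iN in auto)
  also have "(\<integral>x. \<bar>(s x - s0 x - L x) * (g x * (s x + s0 x))\<bar> \<partial>M)
      \<le> norm_L2 M (\<lambda>x. s x - s0 x - L x) * norm_L2 M (\<lambda>x. g x * (s x + s0 x))"
    by (rule integral_abs_mult_le_norm_L2[OF r gp])
  finally show ?thesis by simp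
qed

(* With s = sqrt q the moment is the integral of g s\<^sup>2; the uniform moment bound keeps g (s \<plusminus> s0)
   bounded in L2, which controls both error terms of its expansion. *)
locale dqm_moment =
  fixes M :: "'x measure" and \<Theta> :: "(real, 'd::finite) vec set" and \<theta>0 :: "(real, 'd) vec"
    and D :: "'x \<Rightarrow> (real, 'd) vec" and q :: "(real, 'd) vec \<Rightarrow> 'x \<Rightarrow> real"
    and g :: "'x \<Rightarrow> real" and C :: real
  assumes dqm: "dqm (\<lambda>\<theta> x. sqrt (q \<theta> x)) M \<Theta> \<theta>0 D"
    and \<Theta>: "open \<Theta>" "\<theta>0 \<in> \<Theta>"
    and q_nonneg: "\<And>\<theta> x. \<theta> \<in> \<Theta> \<Longrightarrow> 0 \<le> q \<theta> x"
    and measurable_g[measurable]: "g \<in> borel_measurable M"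
    and moment: "\<And>\<theta>. \<theta> \<in> \<Theta> \<Longrightarrow>
      integrable M (\<lambda>x. (g x)\<^sup>2 * q \<theta> x) \<and> (\<integral>x. (g x)\<^sup>2 * q \<theta> x \<partial>M) \<le> C"
begin

abbreviation root :: "(real, 'd) vec \<Rightarrow> 'x \<Rightarrow> real" where
  "root \<theta> x \<equiv> sqrt (q \<theta> x)"

definition gradient :: "(real, 'd) vec" where
  "gradient = (\<integral>x. (2 * g x * root \<theta>0 x) *\<^sub>R D x \<partial>M)"

definition cross_term :: "(real, 'd) vec \<Rightarrow> real" where
  "cross_term \<theta> = (\<integral>x. \<bar>norm (D x) * (g x * (root \<theta> x - root \<theta>0 x))\<bar> \<partial>M)"

definition remainder :: "(real, 'd) vec \<Rightarrow> real" where
  "remainder \<theta> = norm_L2 M (\<lambda>x. root \<theta> x - root \<theta>0 x - (\<theta> - \<theta>0) \<bullet> D x)"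

lemma measurable_D[measurable]: "D \<in> borel_measurable M"
  using dqm by (simp add: dqm_def)

lemma square_integrable_root: "\<theta> \<in> \<Theta> \<Longrightarrow> square_integrable M (root \<theta>)"
  by (rule dqm_square_integrable[OF dqm])

lemma square_integrable_weighted_root:
  assumes "\<theta> \<in> \<Theta>"
  shows "square_integrable M (\<lambda>x. g x * root \<theta> x) \<and> norm_L2 M (\<lambda>x. g x * root \<theta> x) \<le> sqrt C"
proof -
  have "(g x * root \<theta> x)\<^sup>2 = (g x)\<^sup>2 * q \<theta> x" for x
    using q_nonneg[OF assms] by (simp add: power_mult_distrib)
  then show ?thesis
    using moment[OF assms] square_integrableD(1)[OF square_integrable_root[OF assms]]
    by (simp add: square_integrable_def norm_L2_def)
qed

lemma square_integrable_weighted_root_pm: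
  assumes \<theta>: "\<theta> \<in> \<Theta>" and \<sigma>: "\<bar>\<sigma>\<bar> = 1"
  shows "square_integrable M (\<lambda>x. g x * (root \<theta> x + \<sigma> * root \<theta>0 x))
      \<and> norm_L2 M (\<lambda>x. g x * (root \<theta> x + \<sigma> * root \<theta>0 x)) \<le> 2 * sqrt C"
proof -
  note gs = square_integrable_weighted_root[OF \<theta>] and gs0 = square_integrable_weighted_root[OF \<Theta>(2)]
  have u: "square_integrable M (\<lambda>x. \<sigma> * (g x * root \<theta>0 x))"
    using gs0 by (intro square_integrable_cmult) simp
  have "norm_L2 M (\<lambda>x. g x * root \<theta> x + \<sigma> * (g x * root \<theta>0 x)) \<le> sqrt C + sqrt C"
    using norm_L2_add_le[OF conjunct1[OF gs] u] gs gs0 by (simp add: norm_L2_cmult \<sigma>)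
  then show ?thesis
    using square_integrable_add[OF conjunct1[OF gs] u] by (simp add: algebra_simps)
qed

lemma inner_gradient: "h \<bullet> gradient = (\<integral>x. 2 * g x * root \<theta>0 x * (h \<bullet> D x) \<partial>M)"
proof -
  have "integrable M (\<lambda>x. (2 * g x * root \<theta>0 x) *\<^sub>R D x)"
  proof (rule Bochner_Integration.integrable_bound)
    show "integrable M (\<lambda>x. (2 * (g x * root \<theta>0 x)) * norm (D x))"
      using square_integrable_weighted_root[OF \<Theta>(2)] dqm_square_integrable_norm[OF dqm]
      by (intro square_integrable_mult_integrable square_integrable_cmult) auto
  qed (use square_integrableD(1)[OF square_integrable_root[OF \<Theta>(2)]] in \<open>auto simp: abs_mult\<close>)
  then show ?thesis
    unfolding gradient_def by (subst integral_inner_right[symmetric]) simp_all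
qed

lemma moment_remainder_bound:
  assumes \<theta>: "\<theta> \<in> \<Theta>"
  shows "\<bar>(\<integral>x. g x * q \<theta> x \<partial>M) - (\<integral>x. g x * q \<theta>0 x \<partial>M) - (\<theta> - \<theta>0) \<bullet> gradient\<bar>
    \<le> norm (\<theta> - \<theta>0) * cross_term \<theta> + remainder \<theta> * (2 * sqrt C)"
proof -
  have q: "(\<integral>x. g x * q \<theta>' x \<partial>M) = (\<integral>x. g x * (root \<theta>' x)\<^sup>2 \<partial>M)" if "\<theta>' \<in> \<Theta>" for \<theta>'
    using q_nonneg[OF that] by simp
  have LN: "\<bar>(\<theta> - \<theta>0) \<bullet> D x\<bar> \<le> norm (\<theta> - \<theta>0) * \<bar>norm (D x)\<bar>" for x
    using Cauchy_Schwarz_ineq2 by simp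
  have "\<bar>(\<integral>x. g x * q \<theta> x \<partial>M) - (\<integral>x. g x * q \<theta>0 x \<partial>M) - (\<theta> - \<theta>0) \<bullet> gradient\<bar>
      \<le> norm (\<theta> - \<theta>0) * cross_term \<theta> + remainder \<theta> * norm_L2 M (\<lambda>x. g x * (root \<theta> x + root \<theta>0 x))"
    unfolding q[OF \<theta>] q[OF \<Theta>(2)] inner_gradient cross_term_def remainder_def
    by (rule integral_square_difference_bound[OF square_integrable_root[OF \<theta>]
          square_integrable_root[OF \<Theta>(2)] conjunct1[OF square_integrable_weighted_root[OF \<theta>]]
          conjunct1[OF square_integrable_weighted_root[OF \<Theta>(2)]]
          dqm_square_integrable_inner(1)[OF dqm] dqm_square_integrable_norm[OF dqm] LN])
  also have "\<dots> \<le> norm (\<theta> - \<theta>0) * cross_term \<theta> + remainder \<theta> * (2 * sqrt C)"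
    using square_integrable_weighted_root_pm[OF \<theta>, of 1]
    by (intro add_left_mono mult_left_mono) (auto simp: remainder_def norm_L2_nonneg)
  finally show ?thesis .
qed

lemma cross_term_tendsto_zero: "(cross_term \<longlongrightarrow> 0) (at \<theta>0 within \<Theta>)"
  unfolding cross_term_def
proof (rule integral_abs_cross_term_tendsto_zero[OF dqm_square_integrable_norm[OF dqm], where B = "2 * sqrt C"])
  show "\<forall>\<^sub>F \<theta> in at \<theta>0 within \<Theta>. square_integrable M (\<lambda>x. root \<theta> x - root \<theta>0 x)
      \<and> square_integrable M (\<lambda>x. g x * (root \<theta> x - root \<theta>0 x))
      \<and> norm_L2 M (\<lambda>x. g x * (root \<theta> x - root \<theta>0 x)) \<le> 2 * sqrt C"
  proof (rule eventually_mono)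
    show "\<forall>\<^sub>F \<theta> in at \<theta>0 within \<Theta>. \<theta> \<in> \<Theta>" by (simp add: eventually_at_filter)
  qed (use square_integrable_weighted_root_pm[of _ "-1"] square_integrable_root \<Theta>(2)
       in \<open>auto intro!: square_integrable_diff\<close>)
qed (use dqm_norm_L2_tendsto_zero[OF dqm \<Theta>(2)] in auto)

lemma moment_has_derivative:
  "((\<lambda>\<theta>. \<integral>x. g x * q \<theta> x \<partial>M) has_derivative (\<lambda>h. h \<bullet> gradient)) (at \<theta>0)"
proof -
  have "((\<lambda>\<theta>. \<integral>x. g x * q \<theta> x \<partial>M) has_derivative (\<lambda>h. h \<bullet> gradient)) (at \<theta>0 within \<Theta>)"
  proof (rule has_derivative_within_remainder_bound[OF bounded_linear_inner_left])
    show "\<forall>\<^sub>F \<theta> in at \<theta>0 within \<Theta>.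
        norm ((\<integral>x. g x * q \<theta> x \<partial>M) - (\<integral>x. g x * q \<theta>0 x \<partial>M) - (\<theta> - \<theta>0) \<bullet> gradient)
        \<le> norm (\<theta> - \<theta>0) * (cross_term \<theta> + remainder \<theta> / norm (\<theta> - \<theta>0) * (2 * sqrt C))"
      using moment_remainder_bound by (auto simp: eventually_at_filter distrib_left)
    show "((\<lambda>\<theta>. cross_term \<theta> + remainder \<theta> / norm (\<theta> - \<theta>0) * (2 * sqrt C)) \<longlongrightarrow> 0)
        (at \<theta>0 within \<Theta>)"
      using tendsto_add[OF cross_term_tendsto_zero tendsto_mult_left_zero[OF dqm_remainder_tendsto_zero[OF dqm]]]
      unfolding remainder_def by (simp only: add_0_left)
  qed
  then show ?thesis
    by (simp add: at_within_open[OF \<Theta>(2,1)])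
qed

end

section \<open>The inverse-propensity-weighted functional\<close>

lemma pw_mult_phi1:
  assumes "a \<in> {0, 1}" "0 < \<pi> (S z)" "\<pi> (S z) < 1"
  shows "pw \<pi> S a z * phi1 \<pi> S y a z = (if a = 1 then y else - y)"
  using assms by (auto simp: pw_def phi1_def field_simps)

lemma score_arm: "a \<in> {0, 1} \<Longrightarrow> score q D y a z = score_a q D a (y, z)"
  by (auto simp: score_def)

lemma density_scaleR_score_a:
  assumes "0 \<le> q a x"
  shows "q a x *\<^sub>R score_a q D a x = (2 * sqrt (q a x)) *\<^sub>R D a x"
proof (cases "q a x = 0")
  case False
  have "q a x * (2 / sqrt (q a x)) = 2 * (q a x / sqrt (q a x))" by simp
  also have "\<dots> = 2 * sqrt (q a x)" using assms by (simp add: real_div_sqrt)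
  finally show ?thesis using assms False by (simp add: score_a_def)
qed (simp add: score_a_def)

lemma EP_phi1:
  assumes \<pi>: "\<And>z. 0 < \<pi> (S z) \<and> \<pi> (S z) < 1"
  shows "EP \<mu>0 \<mu>1 \<mu>Z \<pi> S q (phi1 \<pi> S)
    = (\<integral>x. fst x * q 1 x \<partial>nuA \<mu>0 \<mu>1 \<mu>Z 1) - (\<integral>x. fst x * q 0 x \<partial>nuA \<mu>0 \<mu>1 \<mu>Z 0)"
proof -
  have "(q a x * pw \<pi> S a (snd x)) *\<^sub>R phi1 \<pi> S (fst x) a (snd x)
      = (if a = 1 then fst x * q a x else - (fst x * q a x))" if "a \<in> {0, 1}" for a x
    using pw_mult_phi1[OF that, of \<pi> S "snd x" "fst x"] \<pi>[of "snd x"] by (simp add: mult_ac)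
  then show ?thesis by (simp add: EP_def)
qed

lemma EP_phi1_score:
  assumes \<pi>: "\<And>z. 0 < \<pi> (S z) \<and> \<pi> (S z) < 1"
    and q_nonneg: "\<And>a x. a \<in> {0, 1} \<Longrightarrow> 0 \<le> q a x"
  shows "EP \<mu>0 \<mu>1 \<mu>Z \<pi> S q (\<lambda>y a z. phi1 \<pi> S y a z *\<^sub>R score q D y a z)
    = (\<integral>x. (2 * fst x * sqrt (q 1 x)) *\<^sub>R D 1 x \<partial>nuA \<mu>0 \<mu>1 \<mu>Z 1)
      - (\<integral>x. (2 * fst x * sqrt (q 0 x)) *\<^sub>R D 0 x \<partial>nuA \<mu>0 \<mu>1 \<mu>Z 0)"
proof -
  have "(q a x * pw \<pi> S a (snd x)) *\<^sub>R (phi1 \<pi> S (fst x) a (snd x) *\<^sub>R score q D (fst x) a (snd x))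
      = (if a = 1 then 1 else -1) *\<^sub>R ((2 * fst x * sqrt (q a x)) *\<^sub>R D a x)" if "a \<in> {0, 1}" for a x
  proof -
    have "(q a x * pw \<pi> S a (snd x)) *\<^sub>R (phi1 \<pi> S (fst x) a (snd x) *\<^sub>R score q D (fst x) a (snd x))
        = (pw \<pi> S a (snd x) * phi1 \<pi> S (fst x) a (snd x)) *\<^sub>R (q a x *\<^sub>R score_a q D a x)"
      unfolding score_arm[OF that] by (simp add: mult_ac)
    then show ?thesis
      using pw_mult_phi1[OF that, of \<pi> S "snd x" "fst x"] \<pi>[of "snd x"]
        density_scaleR_score_a[of q a x D, OF q_nonneg[OF that]]
      by simp
  qed
  then show ?thesis by (simp add: EP_def)
qed

section \<open>Conditional means from a joint density\<close>

locale outcome_density = pair_sigma_finite Ma N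
  for Ma :: "real measure" and N :: "'z measure" +
  fixes q :: "real \<times> 'z \<Rightarrow> real"
  assumes sets_Ma: "sets Ma = sets borel"
    and q_nonneg: "\<And>x. 0 \<le> q x"
    and q_integrable: "integrable (Ma \<Otimes>\<^sub>M N) q"
    and q_second_moment: "integrable (Ma \<Otimes>\<^sub>M N) (\<lambda>x. (fst x)\<^sup>2 * q x)"
begin

definition marginal :: "'z \<Rightarrow> real" where
  "marginal z = (\<integral>y. q (y, z) \<partial>Ma)"

definition first_moment :: "'z \<Rightarrow> real" where
  "first_moment z = (\<integral>y. y * q (y, z) \<partial>Ma)"

definition second_moment :: "'z \<Rightarrow> real" where
  "second_moment z = (\<integral>y. y\<^sup>2 * q (y, z) \<partial>Ma)"

lemma measurable_density[measurable]: "q \<in> borel_measurable (Ma \<Otimes>\<^sub>M N)"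
  using q_integrable by (rule borel_measurable_integrable)

lemma measurable_fst_borel[measurable]: "fst \<in> borel_measurable (Ma \<Otimes>\<^sub>M N)"
  by (rule measurable_compose[OF measurable_fst measurable_ident_sets[OF sets_Ma]])

lemma integrable_fst_mult: "integrable (Ma \<Otimes>\<^sub>M N) (\<lambda>x. fst x * q x)"
proof (rule Bochner_Integration.integrable_bound)
  show "integrable (Ma \<Otimes>\<^sub>M N) (\<lambda>x. ((fst x)\<^sup>2 * q x + q x) / 2)"
    using q_second_moment q_integrable by auto
  show "AE x in Ma \<Otimes>\<^sub>M N. norm (fst x * q x) \<le> norm (((fst x)\<^sup>2 * q x + q x) / 2)"
  proof (rule AE_I2)
    fix x :: "real \<times> 'z"
    have "2 * \<bar>fst x\<bar> * 1 \<le> (fst x)\<^sup>2 + 1\<^sup>2"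
      using sum_squares_bound[of "\<bar>fst x\<bar>" 1] by simp
    from mult_right_mono[OF this q_nonneg[of x]] show "norm (fst x * q x) \<le> norm (((fst x)\<^sup>2 * q x + q x) / 2)"
      using q_nonneg[of x] by (simp add: abs_mult algebra_simps)
  qed
qed simp

lemma AE_integrable_sections:
  "AE z in N. integrable Ma (\<lambda>y. q (y, z)) \<and> integrable Ma (\<lambda>y. y * q (y, z))
     \<and> integrable Ma (\<lambda>y. y\<^sup>2 * q (y, z))"
  using AE_integrable_snd[of "\<lambda>y z. q (y, z)"] AE_integrable_snd[of "\<lambda>y z. y * q (y, z)"]
    AE_integrable_snd[of "\<lambda>y z. y\<^sup>2 * q (y, z)"]
    q_integrable integrable_fst_mult q_second_moment
  by (auto simp: case_prod_beta' elim: AE_mp intro!: AE_I2)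

lemma integrable_marginal: "integrable N marginal"
  and integral_marginal: "(\<integral>z. marginal z \<partial>N) = (\<integral>x. q x \<partial>(Ma \<Otimes>\<^sub>M N))"
  using integrable_snd[of "\<lambda>y z. q (y, z)"] integral_snd[of "\<lambda>y z. q (y, z)"] q_integrable
  by (auto simp: marginal_def[abs_def] case_prod_beta')

lemma integrable_first_moment: "integrable N first_moment"
  and integral_first_moment: "(\<integral>z. first_moment z \<partial>N) = (\<integral>x. fst x * q x \<partial>(Ma \<Otimes>\<^sub>M N))"
  using integrable_snd[of "\<lambda>y z. y * q (y, z)"] integral_snd[of "\<lambda>y z. y * q (y, z)"]
    integrable_fst_mult
  by (auto simp: first_moment_def[abs_def] case_prod_beta')

lemma integrable_second_moment: "integrable N second_moment"
  using integrable_snd[of "\<lambda>y z. y\<^sup>2 * q (y, z)"] q_second_moment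
  by (auto simp: second_moment_def[abs_def] case_prod_beta')

lemma measurable_marginal[measurable]: "marginal \<in> borel_measurable N"
  and measurable_first_moment[measurable]: "first_moment \<in> borel_measurable N"
  using integrable_marginal integrable_first_moment by auto

lemma measurable_cond_mean[measurable]: "cond_mean Ma q \<in> borel_measurable N"
  unfolding cond_mean_def[abs_def] marginal_def[symmetric] first_moment_def[symmetric] by measurable

lemma marginal_nonneg: "0 \<le> marginal z"
  unfolding marginal_def using q_nonneg by simp

lemma second_moment_nonneg: "0 \<le> second_moment z"
  unfolding second_moment_def using q_nonneg by simp

lemma first_moment_square_le: "AE z in N. (first_moment z)\<^sup>2 \<le> marginal z * second_moment z"
  using AE_integrable_sections
proof eventually_elim
  case (elim z)
  have [measurable]: "(\<lambda>y. q (y, z)) \<in> borel_measurable Ma"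
    using elim by (auto intro: borel_measurable_integrable)
  have [measurable]: "(\<lambda>y. y) \<in> borel_measurable Ma"
    by (rule measurable_ident_sets[OF sets_Ma])
  have r: "square_integrable Ma (\<lambda>y. sqrt (q (y, z)))"
    and yr: "square_integrable Ma (\<lambda>y. y * sqrt (q (y, z)))"
    using elim q_nonneg by (auto simp: square_integrable_def power_mult_distrib)
  have "\<bar>first_moment z\<bar> \<le> (\<integral>y. \<bar>y * q (y, z)\<bar> \<partial>Ma)"
    unfolding first_moment_def by (rule integral_abs_bound)
  also have "\<dots> = (\<integral>y. \<bar>sqrt (q (y, z)) * (y * sqrt (q (y, z)))\<bar> \<partial>Ma)"
  proof (rule Bochner_Integration.integral_cong[OF refl])
    show "\<bar>y * q (y, z)\<bar> = \<bar>sqrt (q (y, z)) * (y * sqrt (q (y, z)))\<bar>" for y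
      using real_sqrt_mult_self[of "q (y, z)"] q_nonneg[of "(y, z)"] by (simp add: abs_mult)
  qed
  also have "\<dots> \<le> norm_L2 Ma (\<lambda>y. sqrt (q (y, z))) * norm_L2 Ma (\<lambda>y. y * sqrt (q (y, z)))"
    by (rule integral_abs_mult_le_norm_L2[OF r yr])
  also have "\<dots> = sqrt (marginal z * second_moment z)"
    using q_nonneg by (simp add: norm_L2_def marginal_def second_moment_def power_mult_distrib real_sqrt_mult)
  finally show ?case by (rule sqrt_ge_absD)
qed

lemma first_moment_eq_cond_mean: "AE z in N. first_moment z = cond_mean Ma q z * marginal z"
  using first_moment_square_le
  by eventually_elim (auto simp: cond_mean_def marginal_def[symmetric] first_moment_def[symmetric])

lemma integrable_cond_mean_square: "integrable N (\<lambda>z. (cond_mean Ma q z)\<^sup>2 * marginal z)"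
proof (rule Bochner_Integration.integrable_bound[OF integrable_second_moment])
  show "AE z in N. norm ((cond_mean Ma q z)\<^sup>2 * marginal z) \<le> norm (second_moment z)"
    using first_moment_square_le
  proof eventually_elim
    case (elim z)
    have "(cond_mean Ma q z)\<^sup>2 * marginal z \<le> second_moment z"
    proof (cases "marginal z = 0")
      case False
      then have "(cond_mean Ma q z)\<^sup>2 * marginal z = (first_moment z)\<^sup>2 / marginal z"
        by (simp add: cond_mean_def marginal_def[symmetric] first_moment_def[symmetric] power2_eq_square)
      also have "\<dots> \<le> second_moment z"
        using elim False marginal_nonneg[of z] by (simp add: divide_le_eq mult.commute)
      finally show ?thesis .
    qed (simp add: second_moment_nonneg)
    then show ?case by (simp add: marginal_nonneg second_moment_nonneg)
  qed
qed measurable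

lemma integrable_covariate_function:
  assumes [measurable]: "\<phi> \<in> borel_measurable N" and "\<And>z. 0 \<le> \<phi> z"
    and "integrable N (\<lambda>z. \<phi> z * marginal z)"
  shows "integrable (Ma \<Otimes>\<^sub>M N) (\<lambda>x. \<phi> (snd x) * q x)"
  unfolding integrable_iff_bounded
proof
  have "(\<integral>\<^sup>+x. ennreal (norm (\<phi> (snd x) * q x)) \<partial>(Ma \<Otimes>\<^sub>M N))
      = (\<integral>\<^sup>+z. (\<integral>\<^sup>+y. ennreal (\<phi> z * q (y, z)) \<partial>Ma) \<partial>N)"
    using assms(2) q_nonneg by (subst nn_integral_snd[symmetric]) (auto simp: abs_mult)
  also have "\<dots> = (\<integral>\<^sup>+z. ennreal (\<phi> z * marginal z) \<partial>N)"
    using AE_integrable_sections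
  proof (intro nn_integral_cong_AE, eventually_elim)
    case (elim z)
    then show ?case
      using assms(2) q_nonneg by (subst nn_integral_eq_integral) (auto simp: marginal_def)
  qed
  also have "\<dots> < \<infinity>"
    using assms(2,3) marginal_nonneg by (subst nn_integral_eq_integral) auto
  finally show "(\<integral>\<^sup>+x. ennreal (norm (\<phi> (snd x) * q x)) \<partial>(Ma \<Otimes>\<^sub>M N)) < \<infinity>" .
qed measurable

end

section \<open>The projection onto the tangent space\<close>

lemma integrable_bounded_weight_iff:
  fixes f w :: "'a \<Rightarrow> real"
  assumes [measurable]: "f \<in> borel_measurable M" "w \<in> borel_measurable M"
    and "0 < c" "\<And>x. c \<le> w x" "\<And>x. w x \<le> 1" "\<And>x. 0 \<le> f x"
  shows "integrable M (\<lambda>x. f x * w x) \<longleftrightarrow> integrable M f"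
proof
  assume "integrable M (\<lambda>x. f x * w x)"
  then have "integrable M (\<lambda>x. 1 / c * (f x * w x))" by simp
  then show "integrable M f"
  proof (rule Bochner_Integration.integrable_bound)
    show "AE x in M. norm (f x) \<le> norm (1 / c * (f x * w x))"
    proof (rule AE_I2)
      fix x
      have "c * f x \<le> w x * f x" using assms(4,6) by (rule mult_right_mono)
      then show "norm (f x) \<le> norm (1 / c * (f x * w x))"
        using assms(3) assms(6)[of x] order_trans[OF _ \<open>c * f x \<le> w x * f x\<close>]
        by (simp add: field_simps abs_of_nonneg)
    qed
  qed measurable
next
  assume "integrable M f"
  then show "integrable M (\<lambda>x. f x * w x)"
  proof (rule Bochner_Integration.integrable_bound)
    show "AE x in M. norm (f x * w x) \<le> norm (f x)"
    proof (rule AE_I2)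
      fix x
      have "0 \<le> w x" using assms(3) assms(4)[of x] by linarith
      then show "norm (f x * w x) \<le> norm (f x)"
        using assms(5,6)[of x] by (simp add: abs_mult mult_left_le)
    qed
  qed measurable
qed

locale ate_model =
  fixes \<mu>0 \<mu>1 :: "real measure" and \<mu>Z :: "(real, 'k::finite) vec measure"
    and S :: "(real, 'k) vec \<Rightarrow> nat" and nS :: nat and \<pi> :: "nat \<Rightarrow> real"
    and q :: "nat \<Rightarrow> real \<times> (real, 'k) vec \<Rightarrow> real"
  assumes sets_\<mu>0: "sets \<mu>0 = sets borel" and sets_\<mu>1: "sets \<mu>1 = sets borel"
    and sets_\<mu>Z: "sets \<mu>Z = sets borel"
    and sigma_finite: "sigma_finite_measure \<mu>0" "sigma_finite_measure \<mu>1" "sigma_finite_measure \<mu>Z"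
    and S_meas: "S \<in> measurable borel (count_space UNIV)"
    and S_range: "\<And>z. S z \<in> {1..nS}"
    and \<pi>_range: "\<And>s. s \<in> {1..nS} \<Longrightarrow> 0 < \<pi> s \<and> \<pi> s < 1"
    and q_nonneg: "\<And>a x. a \<in> {0, 1} \<Longrightarrow> 0 \<le> q a x"
    and q_integrable: "\<And>a. a \<in> {0, 1} \<Longrightarrow> integrable (nuA \<mu>0 \<mu>1 \<mu>Z a) (q a)"
    and q_integral: "\<And>a. a \<in> {0, 1} \<Longrightarrow> (\<integral>x. q a x \<partial>nuA \<mu>0 \<mu>1 \<mu>Z a) = 1"
    and q_second_moment:
      "\<And>a. a \<in> {0, 1} \<Longrightarrow> integrable (nuA \<mu>0 \<mu>1 \<mu>Z a) (\<lambda>x. (fst x)\<^sup>2 * q a x)"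
    and common_marginal: "AE z in \<mu>Z. (\<integral>y. q 1 (y, z) \<partial>\<mu>1) = (\<integral>y. q 0 (y, z) \<partial>\<mu>0)"
begin

(* Keeps the arm index 1 from being rewritten to Suc 0. *)
declare One_nat_def [simp del]

abbreviation arm_measure :: "nat \<Rightarrow> real measure" where
  "arm_measure a \<equiv> if a = 1 then \<mu>1 else \<mu>0"

abbreviation \<nu> :: "nat \<Rightarrow> (real \<times> (real, 'k) vec) measure" where
  "\<nu> a \<equiv> nuA \<mu>0 \<mu>1 \<mu>Z a"

(* The law of (Y(a), Z) under Q_0; by L2P_iff, L2(P_0) is the product of the L2 spaces of the
   two arm laws. *)
definition arm_law :: "nat \<Rightarrow> (real \<times> (real, 'k) vec) measure" where
  "arm_law a = density (\<nu> a) (\<lambda>x. ennreal (q a x))"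

(* regression a is m_*(a, .) and ate is beta_0 in the notation of the paper. *)
definition regression :: "nat \<Rightarrow> (real, 'k) vec \<Rightarrow> real" where
  "regression a = cond_mean (arm_measure a) (q a)"

definition ate :: real where
  "ate = (\<integral>x. fst x * q 1 x \<partial>\<nu> 1) - (\<integral>x. fst x * q 0 x \<partial>\<nu> 0)"

lemma outcome_density: "a \<in> {0, 1} \<Longrightarrow> outcome_density (arm_measure a) \<mu>Z (q a)"
  unfolding outcome_density_def outcome_density_axioms_def pair_sigma_finite_def
  using sets_\<mu>0 sets_\<mu>1 sigma_finite q_nonneg q_integrable q_second_moment
  by (auto simp: nuA_def)

lemma \<pi>_bounds: "0 < \<pi> (S z)" "\<pi> (S z) < 1"
  using S_range \<pi>_range by auto

lemma measurable_\<pi>[measurable]: "(\<lambda>z. \<pi> (S z)) \<in> borel_measurable \<mu>Z"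
  using S_meas by (simp add: measurable_cong_sets[OF sets_\<mu>Z refl])

lemma measurable_pw[measurable]: "(\<lambda>z. pw \<pi> S a z) \<in> borel_measurable \<mu>Z"
  unfolding pw_def by measurable

lemma pw_bounded_away: obtains c where "0 < c" "\<And>a z. a \<in> {0, 1} \<Longrightarrow> c \<le> pw \<pi> S a z"
proof
  define c where "c = Min ((\<lambda>s. min (\<pi> s) (1 - \<pi> s)) ` {1..nS})"
  have "{1..nS} \<noteq> {}" using S_range by blast
  then show "0 < c" unfolding c_def using \<pi>_range by (subst Min_gr_iff) auto
  show "c \<le> pw \<pi> S a z" if "a \<in> {0, 1}" for a z
  proof -
    have "c \<le> min (\<pi> (S z)) (1 - \<pi> (S z))" unfolding c_def using S_range[of z] by (intro Min_le) auto
    then show ?thesis using that by (auto simp: pw_def)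
  qed
qed

lemma pw_le_1: "a \<in> {0, 1} \<Longrightarrow> pw \<pi> S a z \<le> 1"
  using \<pi>_bounds[of z] by (auto simp: pw_def)

lemma measurable_arm[measurable]:
  "a \<in> {0, 1} \<Longrightarrow> q a \<in> borel_measurable (\<nu> a)"
  "a \<in> {0, 1} \<Longrightarrow> fst \<in> borel_measurable (\<nu> a)"
  "b \<in> {0, 1} \<Longrightarrow> regression b \<in> borel_measurable \<mu>Z"
  using outcome_density.measurable_density[OF outcome_density]
    outcome_density.measurable_fst_borel[OF outcome_density]
    outcome_density.measurable_cond_mean[OF outcome_density]
  by (auto simp: nuA_def regression_def)

abbreviation arm_marginal :: "nat \<Rightarrow> (real, 'k) vec \<Rightarrow> real" where
  "arm_marginal a \<equiv> outcome_density.marginal (arm_measure a) (q a)"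

lemma AE_arm_marginal_eq: "a \<in> {0, 1} \<Longrightarrow> AE z in \<mu>Z. arm_marginal a z = arm_marginal 1 z"
  using common_marginal outcome_density.marginal_def[OF outcome_density[of 0]]
    outcome_density.marginal_def[OF outcome_density[of 1]]
  by auto

lemma integrable_arm_law_iff:
  "a \<in> {0, 1} \<Longrightarrow> u \<in> borel_measurable (\<nu> a) \<Longrightarrow>
    integrable (arm_law a) u \<longleftrightarrow> integrable (\<nu> a) (\<lambda>x. q a x * u x)"
  unfolding arm_law_def by (subst Bochner_Integration.integrable_density) (auto simp: q_nonneg)

lemma square_integrable_arm_law_iff:
  assumes "a \<in> {0, 1}"
  shows "square_integrable (arm_law a) u \<longleftrightarrow>
    u \<in> borel_measurable (\<nu> a) \<and> integrable (\<nu> a) (\<lambda>x. q a x * (u x)\<^sup>2)"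
proof -
  have "u \<in> borel_measurable (arm_law a) \<longleftrightarrow> u \<in> borel_measurable (\<nu> a)"
    by (simp add: arm_law_def)
  then show ?thesis
    using integrable_arm_law_iff[OF assms, of "\<lambda>x. (u x)\<^sup>2"] by (auto simp: square_integrable_def)
qed

lemma finite_measure_arm_law: "a \<in> {0, 1} \<Longrightarrow> finite_measure (arm_law a)"
  by (rule finite_measureI)
    (simp add: arm_law_def emeasure_density nn_integral_eq_integral q_integrable q_nonneg q_integral)

lemma L2P_iff:
  "L2P \<mu>0 \<mu>1 \<mu>Z \<pi> S q h \<longleftrightarrow>
    (\<forall>a\<in>{0, 1}. square_integrable (arm_law a) (\<lambda>x. h (fst x) a (snd x)))"
proof -
  obtain c where c: "0 < c" "\<And>a z. a \<in> {0, 1} \<Longrightarrow> c \<le> pw \<pi> S a z"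
    using pw_bounded_away by blast
  have "integrable (\<nu> a) (\<lambda>x. q a x * pw \<pi> S a (snd x) * (h (fst x) a (snd x))\<^sup>2)
      \<longleftrightarrow> integrable (\<nu> a) (\<lambda>x. q a x * (h (fst x) a (snd x))\<^sup>2)"
    if "a \<in> {0, 1}" "(\<lambda>x. h (fst x) a (snd x)) \<in> borel_measurable (\<nu> a)" for a
  proof -
    have "(\<lambda>x. pw \<pi> S a (snd x)) \<in> borel_measurable (\<nu> a)"
      by (simp add: nuA_def)
    then show ?thesis
      using integrable_bounded_weight_iff[where f = "\<lambda>x. q a x * (h (fst x) a (snd x))\<^sup>2"
          and w = "\<lambda>x. pw \<pi> S a (snd x)", OF _ _ c(1) c(2)[OF that(1)] pw_le_1[OF that(1)]]
        that q_nonneg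
      by (simp add: mult_ac)
  qed
  then show ?thesis
    unfolding L2P_def by (auto simp: square_integrable_arm_law_iff)
qed

lemma integral_arm_fibres:
  assumes a: "a \<in> {0, 1}" and u: "integrable (\<nu> a) (\<lambda>x. q a x * u x)"
  shows "integrable \<mu>Z (\<lambda>z. \<integral>y. q a (y, z) * u (y, z) \<partial>arm_measure a)"
    and "(\<integral>x. q a x * u x \<partial>\<nu> a) = (\<integral>z. (\<integral>y. q a (y, z) * u (y, z) \<partial>arm_measure a) \<partial>\<mu>Z)"
proof -
  interpret outcome_density "arm_measure a" \<mu>Z "q a" by (rule outcome_density[OF a])
  show "integrable \<mu>Z (\<lambda>z. \<integral>y. q a (y, z) * u (y, z) \<partial>arm_measure a)"
    "(\<integral>x. q a x * u x \<partial>\<nu> a) = (\<integral>z. (\<integral>y. q a (y, z) * u (y, z) \<partial>arm_measure a) \<partial>\<mu>Z)"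
    using integrable_snd[of "\<lambda>y z. q a (y, z) * u (y, z)"] integral_snd[of "\<lambda>y z. q a (y, z) * u (y, z)"] u
    by (simp_all add: nuA_def case_prod_beta')
qed

lemma square_integrable_outcome: "a \<in> {0, 1} \<Longrightarrow> square_integrable (arm_law a) fst"
  using q_second_moment by (simp add: square_integrable_arm_law_iff mult.commute)

lemma square_integrable_const: "a \<in> {0, 1} \<Longrightarrow> square_integrable (arm_law a) (\<lambda>x. k)"
  by (simp add: square_integrable_def finite_measure.integrable_const finite_measure_arm_law)

lemma square_integrable_regression:
  assumes a: "a \<in> {0, 1}" and b: "b \<in> {0, 1}"
  shows "square_integrable (arm_law a) (\<lambda>x. regression b (snd x))"
proof -
  interpret A: outcome_density "arm_measure a" \<mu>Z "q a" by (rule outcome_density[OF a])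
  interpret B: outcome_density "arm_measure b" \<mu>Z "q b" by (rule outcome_density[OF b])
  have "integrable \<mu>Z (\<lambda>z. (regression b z)\<^sup>2 * arm_marginal a z)"
  proof (rule integrable_cong_AE_imp[OF B.integrable_cond_mean_square])
    show "AE z in \<mu>Z. (cond_mean (arm_measure b) (q b) z)\<^sup>2 * arm_marginal b z = (regression b z)\<^sup>2 * arm_marginal a z"
      using AE_arm_marginal_eq[OF a] AE_arm_marginal_eq[OF b] by eventually_elim (simp add: regression_def)
  qed (use b in measurable)
  from A.integrable_covariate_function[OF _ _ this] b show ?thesis
    unfolding square_integrable_arm_law_iff[OF a] by (simp add: nuA_def mult.commute)
qed


lemma square_integrable_regression_contrast:
  assumes a: "a \<in> {0, 1}"
  shows "square_integrable (arm_law a) (\<lambda>x. regression 1 (snd x) - regression 0 (snd x) - ate)"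
  using square_integrable_diff[OF square_integrable_diff[OF square_integrable_regression[OF a, of 1]
      square_integrable_regression[OF a, of 0]] square_integrable_const[OF a, of ate]]
  by simp

lemma integrable_arm_law_mult:
  assumes a: "a \<in> {0, 1}"
    and u: "square_integrable (arm_law a) u" and v: "square_integrable (arm_law a) v"
  shows "integrable (\<nu> a) (\<lambda>x. q a x * (u x * v x))"
proof -
  have [measurable]: "u \<in> borel_measurable (\<nu> a)" "v \<in> borel_measurable (\<nu> a)"
    using u v by (simp_all add: square_integrable_arm_law_iff[OF a])
  have "(\<lambda>x. u x * v x) \<in> borel_measurable (\<nu> a)" by measurable
  then show ?thesis
    using square_integrable_mult_integrable[OF u v] by (simp add: integrable_arm_law_iff[OF a])
qed

lemma phi0_arm:
  "a \<in> {0, 1} \<Longrightarrow> phi0 \<mu>0 \<mu>1 \<pi> S q ate y a z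
    = (if a = 1 then 1 else -1) * ((y - regression a z) / pw \<pi> S a z)
      + (regression 1 z - regression 0 z - ate)"
  by (auto simp: phi0_def pw_def regression_def diff_divide_distrib)

lemma square_integrable_phi0:
  assumes a: "a \<in> {0, 1}"
  shows "square_integrable (arm_law a) (\<lambda>x. phi0 \<mu>0 \<mu>1 \<pi> S q ate (fst x) a (snd x))"
proof -
  obtain c where c: "0 < c" "\<And>z. c \<le> pw \<pi> S a z"
    using pw_bounded_away a by metis
  have w_meas: "(\<lambda>x. (if a = 1 then 1 else -1) / pw \<pi> S a (snd x)) \<in> borel_measurable (arm_law a)"
    unfolding pw_def arm_law_def using a by (simp add: nuA_def)
  have w_bound: "\<bar>(if a = 1 then 1 else -1) / pw \<pi> S a z\<bar> \<le> 1 / c" for z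
  proof -
    have "0 < pw \<pi> S a z" using c(1) c(2)[of z] by linarith
    then have "\<bar>(if a = 1 then 1 else -1) / pw \<pi> S a z\<bar> = 1 / pw \<pi> S a z" by simp
    also have "\<dots> \<le> 1 / c" using c(1) c(2)[of z] by (intro frac_le) simp_all
    finally show ?thesis .
  qed
  have y: "square_integrable (arm_law a) (\<lambda>x. fst x - regression a (snd x))"
    using square_integrable_diff[OF square_integrable_outcome[OF a] square_integrable_regression[OF a a]]
    by simp
  have "square_integrable (arm_law a) (\<lambda>x. (if a = 1 then 1 else -1) / pw \<pi> S a (snd x)
      * (fst x - regression a (snd x)) + (regression 1 (snd x) - regression 0 (snd x) - ate))"
    by (rule square_integrable_add[OF square_integrable_bounded_mult[OF y w_meas w_bound]
          square_integrable_regression_contrast[OF a]])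
  then show ?thesis
    using a by (simp add: phi0_arm)
qed

lemma phi0_fibre_integral:
  assumes a: "a \<in> {0, 1}"
  shows "AE z in \<mu>Z. (\<integral>y. phi0 \<mu>0 \<mu>1 \<pi> S q ate y a z * q a (y, z) \<partial>arm_measure a)
    = (regression 1 z - regression 0 z - ate) * arm_marginal 1 z"
proof -
  interpret outcome_density "arm_measure a" \<mu>Z "q a" by (rule outcome_density[OF a])
  show ?thesis
    using AE_integrable_sections first_moment_eq_cond_mean AE_arm_marginal_eq[OF a]
  proof eventually_elim
    case (elim z)
    define w where "w = (if a = 1 then 1 else -1) / pw \<pi> S a z"
    have phi0_eq: "phi0 \<mu>0 \<mu>1 \<pi> S q ate y a z
        = w * (y - regression a z) + (regression 1 z - regression 0 z - ate)" for y
      by (simp add: phi0_arm[OF a] w_def)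
    have "(\<integral>y. phi0 \<mu>0 \<mu>1 \<pi> S q ate y a z * q a (y, z) \<partial>arm_measure a)
        = (\<integral>y. w * (y * q a (y, z)) + (regression 1 z - regression 0 z - ate - w * regression a z)
              * q a (y, z) \<partial>arm_measure a)"
      unfolding phi0_eq by (simp add: algebra_simps)
    also have "\<dots> = w * first_moment z + (regression 1 z - regression 0 z - ate - w * regression a z)
        * marginal z"
      using elim(1) unfolding first_moment_def marginal_def by (simp split del: if_split)
    also have "\<dots> = (regression 1 z - regression 0 z - ate) * marginal z"
      using elim(2) by (simp add: regression_def algebra_simps)
    finally show ?case
      using elim(3) by simp
  qed
qed

lemma measurable_arm_marginal[measurable]: "a \<in> {0, 1} \<Longrightarrow> arm_marginal a \<in> borel_measurable \<mu>Z"
  using outcome_density.measurable_marginal[OF outcome_density] .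

lemma integral_regression_contrast:
  "(\<integral>z. (regression 1 z - regression 0 z - ate) * arm_marginal 1 z \<partial>\<mu>Z) = 0"
proof -
  interpret A1: outcome_density \<mu>1 \<mu>Z "q 1" using outcome_density[of 1] by simp
  interpret A0: outcome_density \<mu>0 \<mu>Z "q 0" using outcome_density[of 0] by simp
  have "AE z in \<mu>Z. (regression 1 z - regression 0 z - ate) * arm_marginal 1 z
      = A1.first_moment z - A0.first_moment z - ate * A1.marginal z"
    using A1.first_moment_eq_cond_mean A0.first_moment_eq_cond_mean AE_arm_marginal_eq[of 0, simplified]
    by eventually_elim (simp add: regression_def algebra_simps)
  then have "(\<integral>z. (regression 1 z - regression 0 z - ate) * arm_marginal 1 z \<partial>\<mu>Z)
      = (\<integral>z. A1.first_moment z - A0.first_moment z - ate * A1.marginal z \<partial>\<mu>Z)"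
    by (intro integral_cong_AE) (simp_all add: regression_def)
  also have "\<dots> = (\<integral>x. fst x * q 1 x \<partial>\<nu> 1) - (\<integral>x. fst x * q 0 x \<partial>\<nu> 0) - ate * (\<integral>x. q 1 x \<partial>\<nu> 1)"
    using A1.integrable_first_moment A0.integrable_first_moment A1.integrable_marginal
    by (simp add: A1.integral_first_moment A0.integral_first_moment A1.integral_marginal nuA_def)
  finally show ?thesis
    using q_integral[of 1] by (simp add: ate_def)
qed

lemma integral_phi0_arm:
  assumes a: "a \<in> {0, 1}"
  shows "(\<integral>x. phi0 \<mu>0 \<mu>1 \<pi> S q ate (fst x) a (snd x) * q a x \<partial>\<nu> a) = 0"
proof -
  have "integrable (\<nu> a) (\<lambda>x. q a x * (phi0 \<mu>0 \<mu>1 \<pi> S q ate (fst x) a (snd x) * 1))"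
    by (rule integrable_arm_law_mult[OF a square_integrable_phi0[OF a] square_integrable_const[OF a]])
  then have i: "integrable (\<nu> a) (\<lambda>x. q a x * phi0 \<mu>0 \<mu>1 \<pi> S q ate (fst x) a (snd x))"
    by simp
  have "(\<integral>x. q a x * phi0 \<mu>0 \<mu>1 \<pi> S q ate (fst x) a (snd x) \<partial>\<nu> a)
      = (\<integral>z. (\<integral>y. q a (y, z) * phi0 \<mu>0 \<mu>1 \<pi> S q ate y a z \<partial>arm_measure a) \<partial>\<mu>Z)"
    using integral_arm_fibres(2)[OF a i] by simp
  also have "\<dots> = (\<integral>z. (regression 1 z - regression 0 z - ate) * arm_marginal 1 z \<partial>\<mu>Z)"
  proof (rule integral_cong_AE)
    show "(\<lambda>z. \<integral>y. q a (y, z) * phi0 \<mu>0 \<mu>1 \<pi> S q ate y a z \<partial>arm_measure a) \<in> borel_measurable \<mu>Z"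
      using borel_measurable_integrable[OF integral_arm_fibres(1)[OF a i]] by simp
    show "(\<lambda>z. (regression 1 z - regression 0 z - ate) * arm_marginal 1 z) \<in> borel_measurable \<mu>Z"
      by measurable
  qed (use phi0_fibre_integral[OF a] in \<open>auto simp: mult.commute\<close>)
  finally show ?thesis
    using integral_regression_contrast by (simp add: mult.commute)
qed

lemma phi0_in_tangent_space: "phi0 \<mu>0 \<mu>1 \<pi> S q ate \<in> tangent_space \<mu>0 \<mu>1 \<mu>Z \<pi> S q"
proof -
  have "AE z in \<mu>Z. (\<integral>y. phi0 \<mu>0 \<mu>1 \<pi> S q ate y 1 z * q 1 (y, z) \<partial>\<mu>1)
      = (\<integral>y. phi0 \<mu>0 \<mu>1 \<pi> S q ate y 0 z * q 0 (y, z) \<partial>\<mu>0)"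
    using phi0_fibre_integral[of 1, simplified] phi0_fibre_integral[of 0, simplified]
    by eventually_elim simp
  then show ?thesis
    unfolding tangent_space_def L2P_iff using square_integrable_phi0 integral_phi0_arm by auto
qed

lemma integral_covariate_mult_fibres:
  assumes a: "a \<in> {0, 1}"
    and B: "square_integrable (arm_law a) (\<lambda>x. B (snd x))"
    and h: "square_integrable (arm_law a) (\<lambda>x. h (fst x) a (snd x))"
  shows "integrable \<mu>Z (\<lambda>z. B z * (\<integral>y. h y a z * q a (y, z) \<partial>arm_measure a))"
    and "(\<integral>x. q a x * (B (snd x) * h (fst x) a (snd x)) \<partial>\<nu> a)
      = (\<integral>z. B z * (\<integral>y. h y a z * q a (y, z) \<partial>arm_measure a) \<partial>\<mu>Z)"
proof -
  have i: "integrable (\<nu> a) (\<lambda>x. q a x * (B (snd x) * h (fst x) a (snd x)))"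
    by (rule integrable_arm_law_mult[OF a B h])
  have "(\<integral>y. q a (y, z) * (B z * h y a z) \<partial>arm_measure a)
      = B z * (\<integral>y. h y a z * q a (y, z) \<partial>arm_measure a)" for z
    by (simp add: mult_ac)
  then show "integrable \<mu>Z (\<lambda>z. B z * (\<integral>y. h y a z * q a (y, z) \<partial>arm_measure a))"
    and "(\<integral>x. q a x * (B (snd x) * h (fst x) a (snd x)) \<partial>\<nu> a)
      = (\<integral>z. B z * (\<integral>y. h y a z * q a (y, z) \<partial>arm_measure a) \<partial>\<mu>Z)"
    using integral_arm_fibres[OF a i] by simp_all
qed

definition residual :: "nat \<Rightarrow> (real, 'k) vec \<Rightarrow> real" where
  "residual a z = (if a = 1 then 1 else -1) * regression a z
    - pw \<pi> S a z * (regression 1 z - regression 0 z - ate)"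

lemma square_integrable_residual:
  assumes a: "a \<in> {0, 1}"
  shows "square_integrable (arm_law a) (\<lambda>x. residual a (snd x))"
proof -
  have pw: "(\<lambda>x. pw \<pi> S a (snd x)) \<in> borel_measurable (arm_law a)"
    using a by (simp add: arm_law_def nuA_def)
  have pw_bound: "\<bar>pw \<pi> S a z\<bar> \<le> 1" for z
    using pw_le_1[OF a] \<pi>_bounds[of z] by (auto simp: pw_def)
  show ?thesis
    unfolding residual_def
    by (rule square_integrable_diff[OF square_integrable_cmult[OF square_integrable_regression[OF a a]]
          square_integrable_bounded_mult[OF square_integrable_regression_contrast[OF a] pw pw_bound]])
qed

lemma pw_mult_phi1_minus_phi0:
  assumes a: "a \<in> {0, 1}"
  shows "pw \<pi> S a z * (phi1 \<pi> S y a z - phi0 \<mu>0 \<mu>1 \<pi> S q ate y a z) = residual a z"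
proof -
  define p where "p = pw \<pi> S a z"
  define s :: real where "s = (if a = 1 then 1 else -1)"
  define K where "K = regression 1 z - regression 0 z - ate"
  have "p \<noteq> 0" using a \<pi>_bounds[of z] by (auto simp: p_def pw_def)
  have phi1: "p * phi1 \<pi> S y a z = s * y"
    using pw_mult_phi1[OF a, of \<pi> S z y] \<pi>_bounds[of z] by (simp add: p_def s_def)
  have "phi0 \<mu>0 \<mu>1 \<pi> S q ate y a z = s * ((y - regression a z) / p) + K"
    by (simp add: phi0_arm[OF a] p_def s_def K_def)
  then have phi0: "p * phi0 \<mu>0 \<mu>1 \<pi> S q ate y a z = s * (y - regression a z) + p * K"
    using \<open>p \<noteq> 0\<close> by (simp add: distrib_left mult.left_commute[of p])
  have "p * (phi1 \<pi> S y a z - phi0 \<mu>0 \<mu>1 \<pi> S q ate y a z)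
      = p * phi1 \<pi> S y a z - p * phi0 \<mu>0 \<mu>1 \<pi> S q ate y a z"
    by (rule right_diff_distrib)
  also have "\<dots> = s * regression a z - p * K"
    unfolding phi1 phi0 by (simp add: algebra_simps)
  finally show ?thesis by (simp add: residual_def p_def s_def K_def)
qed

lemma EP_phi1_minus_phi0_orthogonal:
  assumes h: "h \<in> tangent_space \<mu>0 \<mu>1 \<mu>Z \<pi> S q"
  shows "EP \<mu>0 \<mu>1 \<mu>Z \<pi> S q (\<lambda>y a z. (phi1 \<pi> S y a z - phi0 \<mu>0 \<mu>1 \<pi> S q ate y a z) * h y a z) = 0"
proof -
  define G where "G a z = (\<integral>y. h y a z * q a (y, z) \<partial>arm_measure a)" for a z
  have h_L2: "square_integrable (arm_law a) (\<lambda>x. h (fst x) a (snd x))" if "a \<in> {0, 1}" for a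
    using h that by (auto simp: tangent_space_def L2P_iff)
  have EP_arm: "(\<integral>x. (q a x * pw \<pi> S a (snd x)) *\<^sub>R ((phi1 \<pi> S (fst x) a (snd x)
        - phi0 \<mu>0 \<mu>1 \<pi> S q ate (fst x) a (snd x)) * h (fst x) a (snd x)) \<partial>\<nu> a)
      = (\<integral>z. residual a z * G a z \<partial>\<mu>Z)" if a: "a \<in> {0, 1}" for a
    using integral_covariate_mult_fibres(2)[of a "residual a" h, OF a square_integrable_residual[OF a] h_L2[OF a]]
      pw_mult_phi1_minus_phi0[OF a]
    by (simp add: G_def mult_ac)
  have integrable_arm: "integrable \<mu>Z (\<lambda>z. residual a z * G a z)" if "a \<in> {0, 1}" for a
    using integral_covariate_mult_fibres(1)[of a "residual a" h, OF that square_integrable_residual[OF that] h_L2[OF that]]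
    by (simp add: G_def)
  have G1_int: "integrable \<mu>Z (G 1)"
    using integral_covariate_mult_fibres(1)[of 1 "\<lambda>_. 1" h, OF _ square_integrable_const h_L2]
    by (simp add: G_def[abs_def])
  have G1_mean: "(\<integral>z. G 1 z \<partial>\<mu>Z) = 0"
    using integral_covariate_mult_fibres(2)[of 1 "\<lambda>_. 1" h, OF _ square_integrable_const h_L2] h
    by (simp add: G_def tangent_space_def mult.commute)
  have "EP \<mu>0 \<mu>1 \<mu>Z \<pi> S q (\<lambda>y a z. (phi1 \<pi> S y a z - phi0 \<mu>0 \<mu>1 \<pi> S q ate y a z) * h y a z)
      = (\<integral>z. residual 0 z * G 0 z + residual 1 z * G 1 z \<partial>\<mu>Z)"
    using integrable_arm[of 0] integrable_arm[of 1] EP_arm[of 0] EP_arm[of 1] by (simp add: EP_def)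
  also have "\<dots> = (\<integral>z. ate * G 1 z \<partial>\<mu>Z)"
  proof (rule integral_cong_AE)
    have "AE z in \<mu>Z. G 1 z = G 0 z"
      using h by (simp add: tangent_space_def G_def)
    then show "AE z in \<mu>Z. residual 0 z * G 0 z + residual 1 z * G 1 z = ate * G 1 z"
      by eventually_elim (simp add: residual_def pw_def algebra_simps)
  qed (use integrable_arm G1_int in auto)
  finally show ?thesis by (simp add: G1_mean)
qed

lemma is_L2_projection_phi0:
  "is_L2_projection \<mu>0 \<mu>1 \<mu>Z \<pi> S q (tangent_space \<mu>0 \<mu>1 \<mu>Z \<pi> S q) (phi1 \<pi> S) (phi0 \<mu>0 \<mu>1 \<pi> S q ate)"
  unfolding is_L2_projection_def using phi0_in_tangent_space EP_phi1_minus_phi0_orthogonal by blast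

end

theorem lemma5:
  fixes \<mu>0 \<mu>1 :: "real measure"
    and \<mu>Z :: "(real, 'k::finite) vec measure"
    and S :: "(real, 'k) vec \<Rightarrow> nat" and nS :: nat and \<pi> :: "nat \<Rightarrow> real"
    and Qs :: "(real \<times> real \<times> (real, 'k) vec \<Rightarrow> real) set"
    and \<Theta> :: "(real, 'd::finite) vec set" and \<theta>0 :: "(real, 'd) vec"
    and q :: "(real, 'd) vec \<Rightarrow> nat \<Rightarrow> real \<times> (real, 'k) vec \<Rightarrow> real"
    and D :: "nat \<Rightarrow> real \<times> (real, 'k) vec \<Rightarrow> (real, 'd) vec"
  assumes sets_\<mu>0: "sets \<mu>0 = sets borel" and sets_\<mu>1: "sets \<mu>1 = sets borel"
    and sets_\<mu>Z: "sets \<mu>Z = sets borel"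
    and sf: "sigma_finite_measure \<mu>0" "sigma_finite_measure \<mu>1" "sigma_finite_measure \<mu>Z"
    \<comment> \<open>the family Q: distributions of W = (Y(0), Y(1), Z) with densities
        w.r.t. mu_0 (x) mu_1 (x) mu_Z and finite second moments of Y(0), Y(1)\<close>
    and Qs: "\<And>w. w \<in> Qs \<Longrightarrow>
        w \<in> borel_measurable (\<mu>0 \<Otimes>\<^sub>M \<mu>1 \<Otimes>\<^sub>M \<mu>Z) \<and> (\<forall>x. 0 \<le> w x) \<and>
        integrable (\<mu>0 \<Otimes>\<^sub>M \<mu>1 \<Otimes>\<^sub>M \<mu>Z) w \<and>
        (\<integral>x. w x \<partial>(\<mu>0 \<Otimes>\<^sub>M \<mu>1 \<Otimes>\<^sub>M \<mu>Z)) = 1 \<and>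
        integrable (\<mu>0 \<Otimes>\<^sub>M \<mu>1 \<Otimes>\<^sub>M \<mu>Z) (\<lambda>x. (fst x)\<^sup>2 * w x) \<and>
        integrable (\<mu>0 \<Otimes>\<^sub>M \<mu>1 \<Otimes>\<^sub>M \<mu>Z) (\<lambda>x. (fst (snd x))\<^sup>2 * w x)"
    \<comment> \<open>stratification and assignment probabilities\<close>
    and S_meas: "S \<in> measurable borel (count_space UNIV)"
    and S_range: "\<And>z. S z \<in> {1..nS}"
    and \<pi>_range: "\<And>s. s \<in> {1..nS} \<Longrightarrow> 0 < \<pi> s \<and> \<pi> s < 1"
    \<comment> \<open>parameter set\<close>
    and \<Theta>: "open \<Theta>" "bounded \<Theta>" "\<theta>0 \<in> \<Theta>"
    \<comment> \<open>P_theta is in the model: q(theta) are the nu_a-densities of (Y(a), Z) under some Q in Qs\<close>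
    and in_model: "\<And>\<theta>. \<theta> \<in> \<Theta> \<Longrightarrow> \<exists>w\<in>Qs.
        (AE x in nuA \<mu>0 \<mu>1 \<mu>Z 1. q \<theta> 1 x = (\<integral>y0. w (y0, fst x, snd x) \<partial>\<mu>0)) \<and>
        (AE x in nuA \<mu>0 \<mu>1 \<mu>Z 0. q \<theta> 0 x = (\<integral>y1. w (fst x, y1, snd x) \<partial>\<mu>1))"
    and dens: "\<And>\<theta> a. \<theta> \<in> \<Theta> \<Longrightarrow> a \<in> {0,1} \<Longrightarrow>
        q \<theta> a \<in> borel_measurable (nuA \<mu>0 \<mu>1 \<mu>Z a) \<and> (\<forall>x. 0 \<le> q \<theta> a x) \<and>
        integrable (nuA \<mu>0 \<mu>1 \<mu>Z a) (q \<theta> a) \<and> (\<integral>x. q \<theta> a x \<partial>(nuA \<mu>0 \<mu>1 \<mu>Z a)) = 1"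
    \<comment> \<open>q_0(.;theta) and q_1(.;theta) share a common Z-marginal\<close>
    and common_marginal: "\<And>\<theta>. \<theta> \<in> \<Theta> \<Longrightarrow>
        AE z in \<mu>Z. (\<integral>y. q \<theta> 1 (y, z) \<partial>\<mu>1) = (\<integral>y. q \<theta> 0 (y, z) \<partial>\<mu>0)"
    \<comment> \<open>P_0 = P_theta0 for a unique theta0\<close>
    and unique: "\<And>\<theta>. \<theta> \<in> \<Theta> \<Longrightarrow>
        (\<forall>a\<in>{0,1}. AE x in nuA \<mu>0 \<mu>1 \<mu>Z a. q \<theta> a x = q \<theta>0 a x) \<Longrightarrow> \<theta> = \<theta>0"
    \<comment> \<open>regularity: DQM of sqrt q_a with derivative D_a, nonsingular information\<close>
    and DQM: "\<And>a. a \<in> {0,1} \<Longrightarrow>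
        dqm (\<lambda>\<theta> x. sqrt (q \<theta> a x)) (nuA \<mu>0 \<mu>1 \<mu>Z a) \<Theta> \<theta>0 (D a)"
    and nonsing: "\<And>a. a \<in> {0,1} \<Longrightarrow> invertible (info_matrix (nuA \<mu>0 \<mu>1 \<mu>Z a) (D a))"
    \<comment> \<open>uniformly bounded second moments\<close>
    and moments: "\<exists>C. \<forall>\<theta>\<in>\<Theta>. \<forall>a\<in>{0,1}.
        integrable (nuA \<mu>0 \<mu>1 \<mu>Z a) (\<lambda>x. (fst x)\<^sup>2 * q \<theta> a x) \<and>
        (\<integral>x. (fst x)\<^sup>2 * q \<theta> a x \<partial>(nuA \<mu>0 \<mu>1 \<mu>Z a)) \<le> C"
  shows "((\<lambda>\<theta>. EP \<mu>0 \<mu>1 \<mu>Z \<pi> S (q \<theta>) (phi1 \<pi> S)) has_derivative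
           (\<lambda>h. h \<bullet> EP \<mu>0 \<mu>1 \<mu>Z \<pi> S (q \<theta>0)
                       (\<lambda>y a z. phi1 \<pi> S y a z *\<^sub>R score (q \<theta>0) D y a z))) (at \<theta>0)
       \<and> is_L2_projection \<mu>0 \<mu>1 \<mu>Z \<pi> S (q \<theta>0) (tangent_space \<mu>0 \<mu>1 \<mu>Z \<pi> S (q \<theta>0))
           (phi1 \<pi> S)
           (phi0 \<mu>0 \<mu>1 \<pi> S (q \<theta>0)
              ((\<integral>x. fst x * q \<theta>0 1 x \<partial>(nuA \<mu>0 \<mu>1 \<mu>Z 1))
               - (\<integral>x. fst x * q \<theta>0 0 x \<partial>(nuA \<mu>0 \<mu>1 \<mu>Z 0))))"
proof -
  have \<pi>: "\<And>z. 0 < \<pi> (S z) \<and> \<pi> (S z) < 1"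
    using S_range \<pi>_range by blast
  obtain C where C: "\<And>\<theta> a. \<theta> \<in> \<Theta> \<Longrightarrow> a \<in> {0, 1} \<Longrightarrow>
      integrable (nuA \<mu>0 \<mu>1 \<mu>Z a) (\<lambda>x. (fst x)\<^sup>2 * q \<theta> a x)
      \<and> (\<integral>x. (fst x)\<^sup>2 * q \<theta> a x \<partial>nuA \<mu>0 \<mu>1 \<mu>Z a) \<le> C"
    using moments by blast
  interpret ate_model \<mu>0 \<mu>1 \<mu>Z S nS \<pi> "q \<theta>0"
  proof (rule ate_model.intro)
    show "\<And>a x. a \<in> {0, 1} \<Longrightarrow> 0 \<le> q \<theta>0 a x"
      and "\<And>a. a \<in> {0, 1} \<Longrightarrow> integrable (nuA \<mu>0 \<mu>1 \<mu>Z a) (q \<theta>0 a)"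
      and "\<And>a. a \<in> {0, 1} \<Longrightarrow> (\<integral>x. q \<theta>0 a x \<partial>nuA \<mu>0 \<mu>1 \<mu>Z a) = 1"
      using dens[OF \<Theta>(3)] by blast+
    show "\<And>a. a \<in> {0, 1} \<Longrightarrow> integrable (nuA \<mu>0 \<mu>1 \<mu>Z a) (\<lambda>x. (fst x)\<^sup>2 * q \<theta>0 a x)"
      using C[OF \<Theta>(3)] by blast
  qed (fact sets_\<mu>0 sets_\<mu>1 sets_\<mu>Z sf S_meas S_range \<pi>_range common_marginal[OF \<Theta>(3)])+
  have mean_derivative: "((\<lambda>\<theta>. \<integral>x. fst x * q \<theta> a x \<partial>nuA \<mu>0 \<mu>1 \<mu>Z a) has_derivative
      (\<lambda>h. h \<bullet> (\<integral>x. (2 * fst x * sqrt (q \<theta>0 a x)) *\<^sub>R D a x \<partial>nuA \<mu>0 \<mu>1 \<mu>Z a))) (at \<theta>0)"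
    if a: "a \<in> {0, 1}" for a
  proof -
    interpret dqm_moment "nuA \<mu>0 \<mu>1 \<mu>Z a" \<Theta> \<theta>0 "D a" "\<lambda>\<theta>. q \<theta> a" fst C
      using DQM[OF a] \<Theta>(1,3) measurable_arm(2)[OF a] dens C a by unfold_locales blast+
    show ?thesis
      using moment_has_derivative by (simp add: gradient_def)
  qed
  have score: "EP \<mu>0 \<mu>1 \<mu>Z \<pi> S (q \<theta>0) (\<lambda>y a z. phi1 \<pi> S y a z *\<^sub>R score (q \<theta>0) D y a z)
      = (\<integral>x. (2 * fst x * sqrt (q \<theta>0 1 x)) *\<^sub>R D 1 x \<partial>nuA \<mu>0 \<mu>1 \<mu>Z 1)
        - (\<integral>x. (2 * fst x * sqrt (q \<theta>0 0 x)) *\<^sub>R D 0 x \<partial>nuA \<mu>0 \<mu>1 \<mu>Z 0)"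
    by (rule EP_phi1_score) (simp_all add: \<pi> q_nonneg)
  have "((\<lambda>\<theta>. EP \<mu>0 \<mu>1 \<mu>Z \<pi> S (q \<theta>) (phi1 \<pi> S)) has_derivative
           (\<lambda>h. h \<bullet> EP \<mu>0 \<mu>1 \<mu>Z \<pi> S (q \<theta>0)
                       (\<lambda>y a z. phi1 \<pi> S y a z *\<^sub>R score (q \<theta>0) D y a z))) (at \<theta>0)"
    unfolding EP_phi1[where \<pi> = \<pi> and S = S, OF \<pi>] score inner_diff_right
    by (intro has_derivative_diff mean_derivative) simp_all
  with is_L2_projection_phi0 show ?thesis
    by (simp add: ate_def)
qed

end
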